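(* Let $\rho_Q(x)$ be a family of density operators on a quantum system $Q$, depending differentiably on a real parameter $x$. Let $\{\mathcal{F}_\alpha\}_{\alpha=1}^{J}$ be a selection measurement on $Q$, where each $\mathcal{F}_\alpha(\rho)=\sum_{j=0}^{J_\alpha-1}M_{\alpha,j}\rho M_{\alpha,j}^\dagger$ is a quantum operation with Kraus operators $M_{\alpha,j}$ and $\sum_{\alpha=1}^J\sum_{j}M_{\alpha,j}^\dagger M_{\alpha,j}=\mathbb{1}_Q$. Write $p(\alpha|x)=\mathrm{Tr}\{\mathcal{F}_\alpha[\rho_Q(x)]\}$ (assumed positive) and $\sigma_{Q|\alpha}(x)=\mathcal{F}_\alpha[\rho_Q(x)]/p(\alpha|x)$. Let $\checkmark\subseteq\{1,\dots,J\}$ be a set of favorable outcomes with complement $\times$, and put $p(\checkmark|x)=\sum_{\alpha\in\checkmark}p(\alpha|x)$, $p(\times|x)=1-p(\checkmark|x)$, both assumed positive. Let $\{|f_\alpha\rangle\}_{\alpha=1}^J$ be orthonormal ancilla states, let $|f_0\rangle$ be an ancilla state orthogonal to all $|f_\alpha\rangle$ with $\alpha\in\checkmark$, and let $|\phi\rangle$ be a fixed state of $Q$ independent of $x$. Define $$\sigma_{QA}(x)=\sum_{\alpha=1}^J p(\alpha|x)\,\sigma_{Q|\alpha}(x)\otimes|f_\alpha\rangle\langle f_\alpha|,$$ $$\sigma_{QA,\checkmark}(x)=\sum_{\alpha\in\checkmark}p(\alpha|x)\,\sigma_{Q|\alpha}(x)\otimes|f_\alpha\rangle\langle f_\alpha|+p(\times|x)\,|\phi\rangle\langle\phi|\otimes|f_0\rangle\langle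 f_0|,$$ $$\sigma_{QA|\checkmark}(x)=\sum_{\alpha\in\checkmark}\frac{p(\alpha|x)}{p(\checkmark|x)}\,\sigma_{Q|\alpha}(x)\otimes|f_\alpha\rangle\langle f_\alpha|.$$ Then the quantum Fisher informations satisfy $$I_{\rho_Q}(x)\ge I_{\sigma_{QA}}(x)\ge I_{\sigma_{QA,\checkmark}}(x)\ge p(\checkmark|x)\,I_{\sigma_{QA|\checkmark}}(x).$$ Moreover, when $\checkmark=\{\alpha\}$ consists of a single outcome, $p(\checkmark|x)\,I_{\sigma_{QA|\checkmark}}(x)=p(\alpha|x)\,I_{\sigma_{Q|\alpha}}(x)$, so the final entry of the chain is $p(\alpha|x)I_{\sigma_{Q|\alpha}}(x)$.
   Context: For a differentiable family of density operators $\rho(x)$, the quantum Fisher information is $I_\rho(x)=\mathrm{Tr}[\rho(x)L(x)^2]$, where the symmetric logarithmic derivative $L(x)$ is a Hermitian operator satisfying $\partial_x\rho(x)=\tfrac12[L(x)\rho(x)+\rho(x)L(x)]$. *)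

theory Defs
  imports "HOL-Analysis.Analysis"
begin

text \<open>Finite-dimensional quantum systems: operators on a system with (finite) basis
  index type 'n are complex matrices of type complex^'n^'n.\<close>

type_synonym 'n cmat = "complex^'n^'n"

definition adj :: "('n::finite) cmat \<Rightarrow> 'n cmat" where
  "adj A = (\<chi> i j. cnj (A $ j $ i))"

definition hermitian :: "('n::finite) cmat \<Rightarrow> bool" where
  "hermitian A \<longleftrightarrow> adj A = A"

definition cinner :: "complex^('n::finite) \<Rightarrow> complex^'n \<Rightarrow> complex" where
  "cinner v w = (\<Sum>i\<in>UNIV. cnj (v $ i) * w $ i)"

definition psd :: "('n::finite) cmat \<Rightarrow> bool" where
  "psd A \<longleftrightarrow> hermitian A \<and> (\<forall>v. 0 \<le> Re (cinner v (A *v v)))"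

definition density_op :: "('n::finite) cmat \<Rightarrow> bool" where
  "density_op A \<longleftrightarrow> psd A \<and> trace A = 1"

definition ket_bra :: "complex^('n::finite) \<Rightarrow> 'n cmat" where
  "ket_bra v = (\<chi> i j. v $ i * cnj (v $ j))"

definition tensor :: "('n::finite) cmat \<Rightarrow> ('a::finite) cmat \<Rightarrow> ('n \<times> 'a) cmat" where
  "tensor A B = (\<chi> p q. A $ fst p $ fst q * B $ snd p $ snd q)"

definition kraus_op :: "(nat \<Rightarrow> ('n::finite) cmat) \<Rightarrow> nat \<Rightarrow> 'n cmat \<Rightarrow> 'n cmat" where
  "kraus_op M k \<rho> = (\<Sum>j<k. M j ** \<rho> ** adj (M j))"

definition qfi :: "(real \<Rightarrow> ('n::finite) cmat) \<Rightarrow> real \<Rightarrow> real" where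
  "qfi \<rho> x = (SOME I. \<exists>D L. (\<rho> has_vector_derivative D) (at x) \<and> hermitian L \<and>
      D = (1/2) *\<^sub>R (L ** \<rho> x + \<rho> x ** L) \<and> I = Re (trace (\<rho> x ** L ** L)))"

end

theory Submission
  imports Defs
begin

text \<open>Each passage of the chain is a trace-nonincreasing completely positive map: \<open>\<rho>\<^sub>Q \<mapsto> \<sigma>\<^sub>Q\<^sub>A\<close> records
  the outcome in orthonormal ancilla states, \<open>\<sigma>\<^sub>Q\<^sub>A \<mapsto> \<sigma>\<^sub>Q\<^sub>A\<^sub>,\<^sub>\<checkmark>\<close> replaces every unfavourable branch by
  \<open>|\<phi>\<rangle>\<langle>\<phi>| \<otimes> |f\<^sub>0\<rangle>\<langle>f\<^sub>0|\<close>, and \<open>\<sigma>\<^sub>Q\<^sub>A\<^sub>,\<^sub>\<checkmark> \<mapsto> p(\<checkmark>) \<sigma>\<^sub>Q\<^sub>A\<^sub>|\<^sub>\<checkmark>\<close> projects the ancilla onto the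
  favourable states. For a Kraus map \<open>\<Phi>\<close> with \<open>\<Sigma>\<^sub>k T\<^sub>k\<^sup>\<dagger>T\<^sub>k \<le> 1\<close> and \<open>\<Phi>(\<rho>\<^sub>i\<^sub>n) = c \<rho>\<^sub>o\<^sub>u\<^sub>t\<close> one has
  \<open>c I\<^sub>o\<^sub>u\<^sub>t \<le> I\<^sub>i\<^sub>n\<close>: every Hermitian \<open>X\<close> satisfies \<open>I\<^sub>i\<^sub>n \<ge> 2 Re Tr(\<rho>\<^sub>i\<^sub>n' X) - Tr(\<rho>\<^sub>i\<^sub>n X\<^sup>2)\<close>;
  for \<open>X = \<Phi>\<^sup>\<dagger>(L)\<close>, with \<open>L\<close> the SLD of \<open>\<rho>\<^sub>o\<^sub>u\<^sub>t\<close>, duality turns the first term into \<open>2 c I\<^sub>o\<^sub>u\<^sub>t\<close>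
  and the Kadison--Schwarz inequality \<open>\<Phi>\<^sup>\<dagger>(L)\<^sup>2 \<le> \<Phi>\<^sup>\<dagger>(L\<^sup>2)\<close> bounds the second by \<open>c I\<^sub>o\<^sub>u\<^sub>t\<close>.

  Since \<open>qfi\<close> is defined by choice, one also needs that an SLD exists and that \<open>Tr(\<rho> L\<^sup>2)\<close>
  does not depend on the choice. Existence holds because \<open>\<rho>'\<close> vanishes on the kernel of \<open>\<rho>\<close>, where
  the positive family \<open>\<rho>\<close> attains its minimum; uniqueness because \<open>\<rho> K + K \<rho> = 0\<close> forces \<open>\<rho> K = 0\<close>.
  For a single favourable outcome \<open>\<sigma>\<^sub>Q\<^sub>A\<^sub>|\<^sub>\<checkmark> = \<sigma>\<^sub>Q\<^sub>|\<^sub>\<alpha> \<otimes> |f\<^sub>\<alpha>\<rangle>\<langle>f\<^sub>\<alpha>|\<close>, and tensoring with a fixed pure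
  state tensors the SLD.\<close>

section \<open>Complex matrices\<close>

lemma scaleR_complex: "r *\<^sub>R (z::complex) = of_real r * z"
  by (fact scaleR_conv_of_real)

text \<open>\<open>adj\<close> for rectangular matrices: Kraus operators may change the dimension.\<close>

definition cadj :: "complex^'n^'m \<Rightarrow> complex^'m^'n" where
  "cadj A = (\<chi> i j. cnj (A $ j $ i))"

lemma adj_eq_cadj: "adj A = cadj A"
  by (simp add: adj_def cadj_def)

lemma cadj_nth [simp]: "cadj A $ i $ j = cnj (A $ j $ i)"
  by (simp add: cadj_def)

lemma cadj_cadj [simp]: "cadj (cadj A) = A"
  by (simp add: vec_eq_iff)

lemma cadj_mult: "cadj (A ** B) = cadj B ** cadj A"
  by (simp add: vec_eq_iff matrix_matrix_mult_def mult.commute)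

lemma cadj_add: "cadj (A + B) = cadj A + cadj B"
  by (simp add: vec_eq_iff)

lemma cadj_diff: "cadj (A - B) = cadj A - cadj B"
  by (simp add: vec_eq_iff)

lemma cadj_scaleR: "cadj (c *\<^sub>R A) = c *\<^sub>R cadj A"
  by (simp add: vec_eq_iff scaleR_complex)

lemma cadj_zero [simp]: "cadj 0 = 0"
  by (simp add: vec_eq_iff)

lemma cadj_mat_1 [simp]: "cadj (mat 1) = mat 1"
  by (simp add: vec_eq_iff mat_def)

lemma cadj_sum: "cadj (\<Sum>k\<in>K. A k) = (\<Sum>k\<in>K. cadj (A k))"
  by (induction K rule: infinite_finite_induct) (auto simp: cadj_add)

lemma hermitian_iff_cadj: "hermitian A \<longleftrightarrow> cadj A = A"
  by (simp add: hermitian_def adj_eq_cadj)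

lemma matrix_diff_ldistrib: "(A::'a::ring_1^'n^'m) ** (B - C) = A ** B - A ** C"
  by (simp add: vec_eq_iff matrix_matrix_mult_def sum_subtractf right_diff_distrib)

lemma matrix_diff_rdistrib: "((B::'a::ring_1^'n^'m) - C) ** A = B ** A - C ** A"
  by (simp add: vec_eq_iff matrix_matrix_mult_def sum_subtractf left_diff_distrib)

lemma matrix_add_rdistrib: "((B::'a::semiring_1^'n^'m) + C) ** A = B ** A + C ** A"
  by (simp add: vec_eq_iff matrix_matrix_mult_def sum.distrib distrib_right)

lemma matrix_neg_left: "(- (A::'a::ring_1^'n^'m)) ** B = - (A ** B)"
  by (simp add: vec_eq_iff matrix_matrix_mult_def sum_negf)

lemma matrix_sum_ldistrib: "(A::'a::semiring_1^'n^'m) ** (\<Sum>k\<in>K. B k) = (\<Sum>k\<in>K. A ** B k)"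
  by (induction K rule: infinite_finite_induct) (auto simp: matrix_add_ldistrib)

lemma matrix_sum_rdistrib: "(\<Sum>k\<in>K. B k) ** (A::'a::semiring_1^'p^'n) = (\<Sum>k\<in>K. B k ** A)"
  by (induction K rule: infinite_finite_induct) (auto simp: matrix_add_rdistrib)

lemma matrix_scaleR_left: "(c *\<^sub>R A) ** (B::complex^'p^'n) = c *\<^sub>R (A ** B)"
  by (simp add: scalar_matrix_assoc)

lemma matrix_scaleR_right: "(A::complex^'n^'m) ** (c *\<^sub>R B) = c *\<^sub>R (A ** B)"
  by (simp add: vec_eq_iff matrix_matrix_mult_def scaleR_complex sum_distrib_left mult_ac)

lemma matrix_vector_mult_scaleR_complex: "(A::complex^'n^'m) *v (c *\<^sub>R v) = c *\<^sub>R (A *v v)"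
  by (simp add: vec_eq_iff matrix_vector_mult_def scaleR_complex sum_distrib_left mult_ac)

lemma matrix_vector_mult_scale: "(A::complex^'n^'m) *v (c *s v) = c *s (A *v v)"
  by (simp add: vec_eq_iff matrix_vector_mult_def sum_distrib_left mult_ac)

lemma column_matrix_mult: "column j (A ** K) = A *v column j K"
  by (simp add: vec_eq_iff column_def matrix_matrix_mult_def matrix_vector_mult_def)

lemma matrix_vector_mult_sum_left: "(\<Sum>k\<in>K. A k) *v v = (\<Sum>k\<in>K. (A k::'a::semiring_1^'n^'m) *v v)"
  by (induction K rule: infinite_finite_induct) (auto simp: matrix_vector_mult_add_rdistrib)

lemma scaleR_matrix_vector_mult: "(c *\<^sub>R A) *v v = c *\<^sub>R ((A::complex^'n^'m) *v v)"
  by (simp add: vec_eq_iff matrix_vector_mult_def scaleR_complex sum_distrib_left mult_ac)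

lemma column_zero [simp]: "column j 0 = 0"
  by (simp add: column_def vec_eq_iff)

lemma matrix_eq_columnsI: "(\<And>j. column j A = column j B) \<Longrightarrow> A = B"
  by (simp add: vec_eq_iff column_def)

lemma trace_sum: "trace (\<Sum>k\<in>K. (A k::complex^'n^'n)) = (\<Sum>k\<in>K. trace (A k))"
  by (induction K rule: infinite_finite_induct) (auto simp: trace_add trace_0[simplified])

lemma trace_neg: "trace (- (A::complex^'n^'n)) = - trace A"
  by (simp add: trace_def sum_negf)

lemma trace_zero [simp]: "trace (0::complex^'n^'n) = 0"
  by (simp add: trace_def)

lemma trace_scaleR: "trace (c *\<^sub>R (A::complex^'n^'n)) = of_real c * trace A"
  by (simp add: trace_def scaleR_complex sum_distrib_left)

lemma trace_cadj: "trace (cadj A) = cnj (trace A)"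
  by (simp add: trace_def)

lemma trace_real_if_hermitian: "cadj A = A \<Longrightarrow> trace A = of_real (Re (trace A))"
  by (metis Reals_cnj_iff complex_is_Real_iff of_real_Re trace_cadj)

lemma cinner_mult_vec: "cinner u ((A::complex^'n^'m) *v v) = cinner (cadj A *v u) v"
  by (simp add: cinner_def matrix_vector_mult_def sum_distrib_left sum_distrib_right mult_ac)
    (rule sum.swap)

lemma cnj_cinner: "cnj (cinner u v) = cinner v u"
  by (simp add: cinner_def mult.commute)

lemma Re_cinner_self: "Re (cinner v v) = (\<Sum>i\<in>UNIV. (cmod (v $ i))\<^sup>2)"
proof -
  have "cnj z * z = of_real ((cmod z)\<^sup>2)" for z
    by (simp add: complex_norm_square mult.commute del: of_real_power)
  then show ?thesis
    by (simp add: cinner_def)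
qed

lemma Re_cinner_self_eq_0: "Re (cinner v v) = 0 \<Longrightarrow> v = 0"
  by (simp add: Re_cinner_self sum_nonneg_eq_0_iff vec_eq_iff)

lemma inner_eq_Re_cinner: "inner v w = Re (cinner v w)"
  by (simp add: inner_vec_def cinner_def inner_complex_def Re_sum)

lemma cinner_add_left: "cinner (u + v) w = cinner u w + cinner v w"
  by (simp add: cinner_def distrib_right sum.distrib)

lemma cinner_add_right: "cinner u (v + w) = cinner u v + cinner u w"
  by (simp add: cinner_def distrib_left sum.distrib)

lemma cinner_scale_left: "cinner (c *s u) v = cnj c * cinner u v"
  by (simp add: cinner_def sum_distrib_left mult_ac)

lemma cinner_scale_right: "cinner u (c *s v) = c * cinner u v"
  by (simp add: cinner_def sum_distrib_left mult_ac)

lemma cinner_scaleR_left: "cinner (c *\<^sub>R u) v = of_real c * cinner u v"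
  by (simp add: cinner_def sum_distrib_left mult_ac scaleR_complex)

lemma cinner_scaleR_right: "cinner u (c *\<^sub>R v) = of_real c * cinner u v"
  by (simp add: cinner_def sum_distrib_left mult_ac scaleR_complex)

lemma cinner_zero_right [simp]: "cinner u 0 = 0"
  by (simp add: cinner_def)

lemma cinner_sum_right: "cinner u (\<Sum>k\<in>K. w k) = (\<Sum>k\<in>K. cinner u (w k))"
  by (induction K rule: infinite_finite_induct) (auto simp: cinner_add_right)

lemma cinner_axis_left: "cinner (axis i 1) (w::complex^'n) = w $ i"
proof -
  have "(\<lambda>k. cnj ((axis i 1::complex^'n) $ k) * w $ k) = (\<lambda>k. if k = i then w $ k else 0)"
    by (auto simp: axis_def)
  then show ?thesis
    unfolding cinner_def by (simp only:) simp
qed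

section \<open>Positive operators and symmetric logarithmic derivatives\<close>

lemma psd_iff: "psd A \<longleftrightarrow> cadj A = A \<and> (\<forall>v. 0 \<le> Re (cinner v (A *v v)))"
  by (simp add: psd_def hermitian_iff_cadj)

lemma trace_sandwich_eq_sum:
  "trace (cadj K ** A ** K) = (\<Sum>j\<in>UNIV. cinner (column j K) (A *v column j K))"
  by (simp add: trace_def cinner_def column_def matrix_matrix_mult_def matrix_vector_mult_def
      sum_distrib_left sum_distrib_right mult_ac) (rule sum.cong[OF refl], rule sum.swap)

lemma trace_psd_sandwich_nonneg: "psd A \<Longrightarrow> 0 \<le> Re (trace (cadj K ** A ** K))"
  by (simp add: trace_sandwich_eq_sum psd_iff Re_sum sum_nonneg)

lemma trace_psd_mult_gram_nonneg:
  assumes "psd A"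
  shows "0 \<le> Re (trace (A ** (cadj G ** G)))"
proof -
  have "trace (A ** (cadj G ** G)) = trace (cadj (cadj G) ** A ** cadj G)"
    by (metis cadj_cadj matrix_mul_assoc trace_mul_sym)
  then show ?thesis
    using trace_psd_sandwich_nonneg[OF assms, of "cadj G"] by simp
qed

lemma quadratic_nonneg_imp_linear_coeff_eq_0:
  fixes a b :: real
  assumes "b \<ge> 0" "\<And>s. 0 \<le> 2 * s * a + s\<^sup>2 * b"
  shows "a = 0"
proof (rule ccontr)
  assume "a \<noteq> 0"
  define t where "t = 1 / (b + 1)"
  have "t > 0" "t * b < 1"
    using assms(1) by (simp_all add: t_def field_simps)
  have "2 * (-a * t) * a + (-a * t)\<^sup>2 * b = a\<^sup>2 * t * (t * b - 2)"
    by (simp add: power2_eq_square algebra_simps)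
  also have "\<dots> < 0"
    using \<open>a \<noteq> 0\<close> \<open>t > 0\<close> \<open>t * b < 1\<close> by (intro mult_pos_neg) auto
  finally show False
    using assms(2)[of "-a * t"] by simp
qed

lemma psd_mult_vec_eq_0:
  assumes psd: "psd A" and form: "Re (cinner w (A *v w)) = 0"
  shows "A *v w = 0"
proof -
  have herm: "cadj A = A" and nonneg: "\<And>v. 0 \<le> Re (cinner v (A *v v))"
    using psd by (auto simp: psd_iff)
  have "Re (cinner u (A *v w)) = 0" for u
  proof (rule quadratic_nonneg_imp_linear_coeff_eq_0)
    show "0 \<le> Re (cinner u (A *v u))"
      by (rule nonneg)
    fix s :: real
    have "cinner w (A *v u) = cnj (cinner u (A *v w))"
      using cinner_mult_vec[of w A u] herm by (simp add: cnj_cinner)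
    then have "Re (cinner (w + s *\<^sub>R u) (A *v (w + s *\<^sub>R u))) =
        2 * s * Re (cinner u (A *v w)) + s\<^sup>2 * Re (cinner u (A *v u))"
      using form
      by (simp add: matrix_vector_right_distrib matrix_vector_mult_scaleR_complex cinner_add_left
          cinner_add_right cinner_scaleR_left cinner_scaleR_right power2_eq_square algebra_simps)
    then show "0 \<le> 2 * s * Re (cinner u (A *v w)) + s\<^sup>2 * Re (cinner u (A *v u))"
      using nonneg[of "w + s *\<^sub>R u"] by simp
  qed
  then show ?thesis
    using Re_cinner_self_eq_0 by blast
qed

lemma psd_mult_eq_0_if_trace_sandwich_eq_0:
  assumes psd: "psd A" and tr: "Re (trace (cadj K ** A ** K)) = 0"
  shows "A ** K = 0"
proof (rule matrix_eq_columnsI)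
  fix j
  have "(\<Sum>j\<in>UNIV. Re (cinner (column j K) (A *v column j K))) = 0"
    using tr by (simp add: trace_sandwich_eq_sum Re_sum)
  then have "Re (cinner (column j K) (A *v column j K)) = 0"
    using psd by (subst (asm) sum_nonneg_eq_0_iff) (auto simp: psd_iff)
  then have "A *v column j K = 0"
    by (rule psd_mult_vec_eq_0[OF psd])
  then show "column j (A ** K) = column j 0"
    by (simp add: column_matrix_mult)
qed

lemma psd_anticommutator_eq_0:
  assumes psd: "psd A" and anti: "A ** K + K ** A = 0"
  shows "A ** K = 0" "K ** A = 0"
proof -
  have KA: "K ** A = - (A ** K)"
    using anti by (simp add: eq_neg_iff_add_eq_0 add.commute)
  have "trace (cadj K ** A ** K) = trace (A ** K ** cadj K)"
    by (metis matrix_mul_assoc trace_mul_sym)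
  moreover have "trace (cadj (cadj K) ** A ** cadj K) = - trace (A ** K ** cadj K)"
    by (simp add: KA matrix_neg_left trace_neg)
  moreover have "0 \<le> Re (trace (cadj K ** A ** K))" "0 \<le> Re (trace (cadj (cadj K) ** A ** cadj K))"
    using psd by (simp_all only: trace_psd_sandwich_nonneg)
  ultimately have "Re (trace (cadj K ** A ** K)) = 0"
    by simp
  then show "A ** K = 0"
    by (rule psd_mult_eq_0_if_trace_sandwich_eq_0[OF psd])
  then show "K ** A = 0"
    by (simp add: KA)
qed

lemma trace_sld_mult:
  "trace ((1/2) *\<^sub>R (L ** A + A ** L) ** L) = trace ((A::complex^'n^'n) ** L ** L)"
proof -
  have "trace (L ** A ** L) = trace (A ** L ** L)"
    by (metis matrix_mul_assoc trace_mul_sym)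
  then show ?thesis
    by (simp add: matrix_scaleR_left matrix_add_rdistrib trace_scaleR trace_add)
qed

lemma sld_variational_bound:
  assumes "psd A" "cadj L = L" "cadj X = X" and D: "D = (1/2) *\<^sub>R (L ** A + A ** L)"
  shows "2 * Re (trace (D ** X)) - Re (trace (A ** X ** X)) \<le> Re (trace (A ** L ** L))"
proof -
  have "0 \<le> Re (trace (A ** (cadj (L - X) ** (L - X))))"
    using assms(1) by (rule trace_psd_mult_gram_nonneg)
  also have "A ** (cadj (L - X) ** (L - X)) = A ** L ** L - A ** L ** X - A ** X ** L + A ** X ** X"
    using assms(2,3)
    by (simp add: cadj_diff matrix_diff_ldistrib matrix_diff_rdistrib matrix_mul_assoc)
  finally have "0 \<le> Re (trace (A ** L ** L)) - Re (trace (A ** L ** X)) - Re (trace (A ** X ** L))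
      + Re (trace (A ** X ** X))"
    by (simp add: trace_add trace_sub)
  moreover have "trace (L ** A ** X) = trace (A ** X ** L)"
    by (metis matrix_mul_assoc trace_mul_sym)
  then have "2 * Re (trace (D ** X)) = Re (trace (A ** X ** L)) + Re (trace (A ** L ** X))"
    by (simp add: D matrix_scaleR_left matrix_add_rdistrib trace_scaleR trace_add)
  ultimately show ?thesis
    by simp
qed

lemma sld_trace_square_unique:
  assumes psd: "psd A"
    and sld: "(1/2) *\<^sub>R (L ** A + A ** L) = (1/2) *\<^sub>R (L' ** A + A ** L')"
  shows "trace (A ** L' ** L') = trace (A ** L ** L)"
proof -
  define K where "K = L - L'"
  have "L ** A + A ** L = L' ** A + A ** L'"
    using sld by simp
  then have "A ** K + K ** A = 0"
    by (simp add: K_def matrix_diff_ldistrib matrix_diff_rdistrib algebra_simps)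
  then have AK: "A ** K = 0" "K ** A = 0"
    using psd_anticommutator_eq_0[OF psd] by auto
  have "A ** L' ** L' = A ** L ** L - A ** L ** K - A ** K ** L + A ** K ** K"
    by (simp add: K_def matrix_diff_ldistrib matrix_diff_rdistrib matrix_mul_assoc)
  moreover have "trace (A ** L ** K) = trace (K ** A ** L)"
    by (metis matrix_mul_assoc trace_mul_sym)
  ultimately show ?thesis
    using AK by (simp add: trace_sub)
qed

lemma qfi_eq_sld:
  assumes psd: "psd (\<rho> x)" and D: "(\<rho> has_vector_derivative D) (at x)"
    and L: "cadj L = L" "D = (1/2) *\<^sub>R (L ** \<rho> x + \<rho> x ** L)"
  shows "qfi \<rho> x = Re (trace (\<rho> x ** L ** L))"
proof -
  let ?P = "\<lambda>I. \<exists>D L. (\<rho> has_vector_derivative D) (at x) \<and> hermitian L \<and>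
      D = (1/2) *\<^sub>R (L ** \<rho> x + \<rho> x ** L) \<and> I = Re (trace (\<rho> x ** L ** L))"
  have "?P (Re (trace (\<rho> x ** L ** L)))"
    using D L by (auto simp: hermitian_iff_cadj)
  then have "?P (qfi \<rho> x)"
    unfolding qfi_def by (rule someI)
  then obtain D' L' where D': "(\<rho> has_vector_derivative D') (at x)"
    and L': "D' = (1/2) *\<^sub>R (L' ** \<rho> x + \<rho> x ** L')" "qfi \<rho> x = Re (trace (\<rho> x ** L' ** L'))"
    by blast
  have "D' = D"
    using D' D by (rule vector_derivative_unique_at)
  then have "(1/2) *\<^sub>R (L ** \<rho> x + \<rho> x ** L) = (1/2) *\<^sub>R (L' ** \<rho> x + \<rho> x ** L')"
    using L(2) L'(1) by simp
  then have "trace (\<rho> x ** L' ** L') = trace (\<rho> x ** L ** L)"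
    by (rule sld_trace_square_unique[OF psd])
  with L'(2) show ?thesis
    by simp
qed

lemma linear_has_vector_derivative:
  fixes f :: "'a::euclidean_space \<Rightarrow> 'b::real_normed_vector"
  assumes "linear f" "(g has_vector_derivative g') F"
  shows "((\<lambda>t. f (g t)) has_vector_derivative f g') F"
  using assms by (simp add: linear_conv_bounded_linear bounded_linear.has_vector_derivative)

lemma linear_cadj: "linear cadj"
  by (rule linearI) (auto simp: cadj_add cadj_scaleR)

lemma hermitian_derivative:
  assumes "\<And>t. cadj (\<rho> t) = \<rho> t" "(\<rho> has_vector_derivative D) (at x)"
  shows "cadj D = D"
proof -
  have "((\<lambda>t. cadj (\<rho> t)) has_vector_derivative cadj D) (at x)"
    by (rule linear_has_vector_derivative[OF linear_cadj assms(2)])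
  then have "(\<rho> has_vector_derivative cadj D) (at x)"
    using assms(1) by simp
  then show ?thesis
    using assms(2) by (rule vector_derivative_unique_at)
qed

lemma linear_quadratic_form: "linear (\<lambda>A::complex^'n^'n. Re (cinner v (A *v v)))"
  by (intro linearI) (simp_all add: matrix_vector_mult_add_rdistrib scaleR_matrix_vector_mult
      cinner_add_right cinner_scaleR_right)

text \<open>A vector in the kernel of \<open>\<rho> x\<close> minimises \<open>t \<mapsto> \<langle>v, \<rho> t v\<rangle> \<ge> 0\<close> at \<open>x\<close>.\<close>

lemma psd_derivative_form_eq_0_on_kernel:
  assumes psd: "\<And>t. psd (\<rho> t)" and D: "(\<rho> has_vector_derivative D) (at x)"
    and v: "\<rho> x *v v = 0"
  shows "Re (cinner v (D *v v)) = 0"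
proof -
  have "((\<lambda>t. Re (cinner v (\<rho> t *v v))) has_vector_derivative Re (cinner v (D *v v))) (at x)"
    by (rule linear_has_vector_derivative[OF linear_quadratic_form D])
  then have "((\<lambda>t. Re (cinner v (\<rho> t *v v))) has_real_derivative Re (cinner v (D *v v))) (at x)"
    by (simp add: has_real_derivative_iff_has_vector_derivative)
  then show ?thesis
  proof (rule DERIV_local_min[of _ _ _ 1])
    show "\<forall>y. \<bar>x - y\<bar> < 1 \<longrightarrow> Re (cinner v (\<rho> x *v v)) \<le> Re (cinner v (\<rho> y *v v))"
      using v psd by (auto simp: psd_iff)
  qed simp
qed

lemma hermitian_form_eq_0_on_subspace:
  assumes herm: "cadj D = D" and form: "\<And>w. w \<in> W \<Longrightarrow> Re (cinner w (D *v w)) = 0"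
    and add: "\<And>u v. u \<in> W \<Longrightarrow> v \<in> W \<Longrightarrow> u + v \<in> W"
    and scale: "\<And>c u. u \<in> W \<Longrightarrow> c *s u \<in> W"
    and u: "u \<in> W" and v: "v \<in> W"
  shows "cinner u (D *v v) = 0"
proof -
  define z where "z = cinner u (D *v v)"
  have vu: "cinner v (D *v u) = cnj z"
    unfolding z_def using cinner_mult_vec[of u D v] herm by (simp add: cnj_cinner)
  have "Re (cinner (u + v) (D *v (u + v))) = 0"
    using add form u v by blast
  then have "Re z = 0"
    using form[OF u] form[OF v] vu
    by (simp add: matrix_vector_right_distrib cinner_add_left cinner_add_right z_def)
  moreover have "Re (cinner (u + \<i> *s v) (D *v (u + \<i> *s v))) = 0"
    using add scale form u v by blast
  then have "Im z = 0"
    using form[OF u] form[OF v] vu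
    by (simp add: matrix_vector_right_distrib cinner_add_left cinner_add_right
        matrix_vector_mult_scale cinner_scale_left cinner_scale_right z_def)
  ultimately show ?thesis
    by (simp add: z_def complex_eq_iff)
qed

lemma kernel_orthogonal_decomposition:
  fixes A :: "complex^'n^'m"
  obtains a b where "A *v a = 0" "\<And>w. A *v w = 0 \<Longrightarrow> cinner b w = 0" "v = a + b"
proof -
  define W where "W = {w. A *v w = 0}"
  have "subspace W"
    unfolding subspace_def W_def
    by (auto simp: matrix_vector_right_distrib matrix_vector_mult_scaleR_complex)
  then have span: "span W = W"
    by simp
  obtain a b where a: "a \<in> W" and b: "\<And>w. w \<in> W \<Longrightarrow> orthogonal b w" and v: "v = a + b"
    using orthogonal_subspace_decomp_exists[of W v] span by metis
  have "cinner b w = 0" if "w \<in> W" for w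
  proof -
    have "\<i> *s w \<in> W"
      using that by (simp add: W_def matrix_vector_mult_scale)
    then have "Re (cinner b w) = 0" "Re (cinner b (\<i> *s w)) = 0"
      using b that by (simp_all add: orthogonal_def inner_eq_Re_cinner)
    then show ?thesis
      by (simp add: cinner_scale_right complex_eq_iff)
  qed
  then show ?thesis
    using that a v by (auto simp: W_def)
qed

lemma kernel_projector_exists:
  fixes A :: "complex^'n^'n"
  obtains P where "cadj P = P" "\<And>j. A *v column j P = 0" "\<And>w. A *v w = 0 \<Longrightarrow> P *v w = w"
proof -
  have "\<exists>a b. A *v a = 0 \<and> (\<forall>w. A *v w = 0 \<longrightarrow> cinner b w = 0) \<and> axis k 1 = a + b" for k
    using kernel_orthogonal_decomposition[of A "axis k 1"] by blast
  then obtain a b where a: "\<And>k. A *v a k = 0"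
    and b: "\<And>k w. A *v w = 0 \<Longrightarrow> cinner (b k) w = 0" and ab: "\<And>k. axis k 1 = a k + b k"
    by metis
  have ax: "cinner (a i) w = w $ i" if "A *v w = 0" for i w
  proof -
    have "w $ i = cinner (a i + b i) w"
      by (simp only: ab[symmetric] cinner_axis_left)
    then show ?thesis
      using b[OF that, of i] by (simp add: cinner_add_left)
  qed
  have cnj_a: "cnj (a i $ k) = a k $ i" for i k
  proof -
    have "cnj (a i $ k) = cnj (cinner (a k) (a i))"
      using ax[OF a, of k i] by simp
    also have "\<dots> = a k $ i"
      using ax[OF a, of i k] by (simp add: cnj_cinner)
    finally show ?thesis .
  qed
  define P where "P = (\<chi> i k. a k $ i)"
  show ?thesis
  proof
    show "cadj P = P"
      by (simp add: vec_eq_iff P_def cnj_a)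
    show "A *v column j P = 0" for j
      using a[of j] by (simp add: P_def column_def)
    show "P *v w = w" if "A *v w = 0" for w
    proof -
      have "(P *v w) $ i = cinner (a i) w" for i
        by (simp add: P_def matrix_vector_mult_def cinner_def cnj_a)
      then show ?thesis
        using ax[OF that] by (simp add: vec_eq_iff)
    qed
  qed
qed

lemma matrix_mult_eq_right_if_fixes_columns:
  "(\<And>j. P *v column j K = column j K) \<Longrightarrow> P ** K = K"
  by (rule matrix_eq_columnsI) (simp add: column_matrix_mult)

lemma hermitian_sandwich_nth:
  assumes "cadj P = P"
  shows "(P ** (D::complex^'n^'n) ** P) $ i $ j = cinner (column i P) (D *v column j P)"
proof -
  have "P $ i $ k = cnj (P $ k $ i)" for k
    using assms by (metis cadj_nth)
  then show ?thesis
    by (simp add: matrix_matrix_mult_def matrix_vector_mult_def cinner_def column_def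
        sum_distrib_left sum_distrib_right mult_ac) (rule sum.swap)
qed

text \<open>With \<open>P\<close> the projector onto the kernel of \<open>\<rho> x\<close>, the two previous lemmas give
  \<open>P D P = 0\<close>, while \<open>K = P K P\<close>.\<close>

lemma trace_derivative_mult_eq_0:
  assumes psd: "\<And>t. psd (\<rho> t)" and D: "(\<rho> has_vector_derivative D) (at x)"
    and K: "\<rho> x ** K = 0" "K ** \<rho> x = 0"
  shows "trace (D ** K) = 0"
proof -
  have herm: "cadj (\<rho> t) = \<rho> t" for t
    using psd by (simp add: psd_iff)
  obtain P where P: "cadj P = P" "\<And>j. \<rho> x *v column j P = 0"
    and P_fix: "\<And>w. \<rho> x *v w = 0 \<Longrightarrow> P *v w = w"
    by (rule kernel_projector_exists[of "\<rho> x"]) blast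
  have "\<rho> x *v column j K = 0" for j
    using arg_cong[OF K(1), of "column j"] by (simp add: column_matrix_mult)
  then have PK: "P ** K = K"
    by (intro matrix_mult_eq_right_if_fixes_columns P_fix)
  have K_adj: "\<rho> x ** cadj K = 0"
    using arg_cong[OF K(2), of cadj] herm by (simp add: cadj_mult)
  have "\<rho> x *v column j (cadj K) = 0" for j
    using arg_cong[OF K_adj, of "column j"] by (simp add: column_matrix_mult)
  then have "P ** cadj K = cadj K"
    by (intro matrix_mult_eq_right_if_fixes_columns P_fix)
  then have "cadj (P ** cadj K) = K"
    by simp
  then have KP: "K ** P = K"
    using P(1) by (simp add: cadj_mult)
  have "cinner u (D *v v) = 0" if "\<rho> x *v u = 0" "\<rho> x *v v = 0" for u v
    using hermitian_derivative[OF herm D] psd_derivative_form_eq_0_on_kernel[OF psd D] that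
    by (intro hermitian_form_eq_0_on_subspace[where W = "{w. \<rho> x *v w = 0}"])
      (auto simp: matrix_vector_right_distrib matrix_vector_mult_scale)
  then have PDP: "P ** D ** P = 0"
    using P(2) by (simp add: vec_eq_iff hermitian_sandwich_nth[OF P(1)])
  have "trace (D ** K) = trace (D ** (P ** K ** P))"
    using PK KP by simp
  also have "\<dots> = trace (P ** D ** P ** K)"
    using trace_mul_sym[of "D ** P ** K" P] by (simp add: matrix_mul_assoc)
  finally show ?thesis
    by (simp add: PDP)
qed

lemma inner_matrix_eq_Re_trace: "inner (A::complex^'n^'n) B = Re (trace (cadj A ** B))"
  by (simp add: inner_vec_def inner_complex_def trace_def matrix_matrix_mult_def Re_sum)
    (subst sum.swap, simp)

lemma selfadjoint_range_orthogonal_kernel: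
  fixes T :: "'a::euclidean_space \<Rightarrow> 'a"
  assumes lin: "linear T" and selfadj: "\<And>u v. inner u (T v) = inner (T u) v"
    and ker: "\<And>k. T k = 0 \<Longrightarrow> inner v k = 0"
  shows "\<exists>u. T u = v"
proof -
  have span: "span (range T) = range T"
    using linear_subspace_image[OF lin subspace_UNIV] by simp
  obtain y z where y: "y \<in> range T" and z: "\<And>w. w \<in> range T \<Longrightarrow> orthogonal z w"
    and v: "v = y + z"
    using orthogonal_subspace_decomp_exists[of "range T" v] span by metis
  have "inner (T z) (T z) = inner z (T (T z))"
    by (simp add: selfadj)
  also have "\<dots> = 0"
    using z[of "T (T z)"] by (simp add: orthogonal_def)
  finally have "inner v z = 0"
    using ker by simp
  moreover have "inner y z = 0"
    using z[OF y] by (simp add: orthogonal_def inner_commute)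
  ultimately have "z = 0"
    using v by (simp add: inner_add_left)
  then show ?thesis
    using y v by auto
qed

text \<open>The anticommutator map \<open>L \<mapsto> \<rho> L + L \<rho>\<close> is self-adjoint for the trace inner product, so
  its range is the orthogonal complement of its kernel; by \<open>psd_anticommutator_eq_0\<close> and
  \<open>trace_derivative_mult_eq_0\<close> the derivative lies in that complement.\<close>

lemma sld_exists:
  assumes psd: "\<And>t. psd (\<rho> t)" and D: "(\<rho> has_vector_derivative D) (at x)"
  shows "\<exists>L. cadj L = L \<and> D = (1/2) *\<^sub>R (L ** \<rho> x + \<rho> x ** L)"
proof -
  have herm: "cadj (\<rho> t) = \<rho> t" for t
    using psd by (simp add: psd_iff)
  have D_herm: "cadj D = D"
    using hermitian_derivative[OF herm D] .
  define T where "T L = \<rho> x ** L + L ** \<rho> x" for L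
  have lin: "linear T"
    unfolding T_def
    by (rule linearI) (auto simp: matrix_add_ldistrib matrix_add_rdistrib matrix_scaleR_left
        matrix_scaleR_right scaleR_add_right)
  have "inner u (T v) = inner (T u) v" for u v
  proof -
    have "trace (cadj u ** (v ** \<rho> x)) = trace (\<rho> x ** cadj u ** v)"
      by (metis matrix_mul_assoc trace_mul_sym)
    then show ?thesis
      by (simp add: T_def inner_matrix_eq_Re_trace cadj_add cadj_mult herm matrix_add_ldistrib
          matrix_add_rdistrib trace_add matrix_mul_assoc)
  qed
  moreover have "inner (2 *\<^sub>R D) K = 0" if "T K = 0" for K
  proof -
    have "\<rho> x ** K = 0" "K ** \<rho> x = 0"
      using psd_anticommutator_eq_0[OF psd] that by (simp_all add: T_def)
    then have "trace (D ** K) = 0"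
      by (rule trace_derivative_mult_eq_0[OF psd D])
    then show ?thesis
      by (simp add: inner_matrix_eq_Re_trace cadj_scaleR D_herm matrix_scaleR_left trace_scaleR)
  qed
  ultimately obtain U where U: "T U = 2 *\<^sub>R D"
    using selfadjoint_range_orthogonal_kernel[OF lin] by blast
  define L where "L = (1/2) *\<^sub>R (U + cadj U)"
  have "T (cadj U) = cadj (T U)"
    by (simp add: T_def cadj_add cadj_mult herm add.commute)
  then have "T L = 2 *\<^sub>R D"
    using U D_herm by (simp add: L_def linear_add[OF lin] linear_scale[OF lin] cadj_scaleR)
  moreover have "cadj L = L"
    by (simp add: L_def cadj_scaleR cadj_add add.commute)
  ultimately show ?thesis
    by (auto simp: T_def add.commute)
qed

lemma qfi_sld:
  assumes psd: "\<And>t. psd (\<rho> t)" and diff: "\<rho> differentiable (at x)"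
  obtains D L where "(\<rho> has_vector_derivative D) (at x)" "cadj L = L"
    "D = (1/2) *\<^sub>R (L ** \<rho> x + \<rho> x ** L)" "qfi \<rho> x = Re (trace (\<rho> x ** L ** L))"
proof -
  obtain D where D: "(\<rho> has_vector_derivative D) (at x)"
    using diff vector_derivative_works by blast
  moreover obtain L where "cadj L = L" "D = (1/2) *\<^sub>R (L ** \<rho> x + \<rho> x ** L)"
    using sld_exists[OF psd D] by blast
  ultimately show ?thesis
    using qfi_eq_sld[OF psd D] that by blast
qed

section \<open>Monotonicity under Kraus maps\<close>

definition kraus_map :: "'k set \<Rightarrow> ('k \<Rightarrow> complex^'n^'m) \<Rightarrow> complex^'n^'n \<Rightarrow> complex^'m^'m" where
  "kraus_map K T A = (\<Sum>k\<in>K. T k ** A ** cadj (T k))"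

definition kraus_dual :: "'k set \<Rightarrow> ('k \<Rightarrow> complex^'n^'m) \<Rightarrow> complex^'m^'m \<Rightarrow> complex^'n^'n" where
  "kraus_dual K T Y = (\<Sum>k\<in>K. cadj (T k) ** Y ** T k)"

lemma kraus_op_eq_kraus_map: "kraus_op M k = kraus_map {..<k} M"
  by (simp add: fun_eq_iff kraus_op_def kraus_map_def adj_eq_cadj)

lemma linear_kraus_map: "linear (kraus_map K T)"
  unfolding kraus_map_def
  by (rule linearI) (auto simp: matrix_add_ldistrib matrix_add_rdistrib matrix_scaleR_left
      matrix_scaleR_right sum.distrib scaleR_sum_right)

lemma cadj_kraus_dual: "cadj (kraus_dual K T Y) = kraus_dual K T (cadj Y)"
  by (simp add: kraus_dual_def cadj_sum cadj_mult matrix_mul_assoc)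

lemma trace_kraus_map_mult: "trace (kraus_map K T A ** Y) = trace (A ** kraus_dual K T Y)"
proof -
  have "trace (T k ** A ** cadj (T k) ** Y) = trace (A ** (cadj (T k) ** Y ** T k))" for k
    by (metis matrix_mul_assoc trace_mul_sym)
  then show ?thesis
    by (simp add: kraus_map_def kraus_dual_def matrix_sum_rdistrib matrix_sum_ldistrib trace_sum)
qed

lemma trace_kraus_map: "trace (kraus_map K T A) = trace (A ** (\<Sum>k\<in>K. cadj (T k) ** T k))"
  using trace_kraus_map_mult[of K T A "mat 1"] by (simp add: kraus_dual_def)

lemma psd_kraus_map:
  assumes "psd A"
  shows "psd (kraus_map K T A)"
proof -
  have "cinner v (kraus_map K T A *v v) =
      (\<Sum>k\<in>K. cinner (cadj (T k) *v v) (A *v (cadj (T k) *v v)))" for v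
    by (simp add: kraus_map_def matrix_vector_mult_sum_left cinner_sum_right cinner_mult_vec
        matrix_vector_mul_assoc[symmetric])
  then show ?thesis
    using assms by (simp add: psd_iff Re_sum sum_nonneg kraus_map_def cadj_sum cadj_mult
        matrix_mul_assoc)
qed

lemma psd_scaleR: "psd A \<Longrightarrow> 0 \<le> c \<Longrightarrow> psd (c *\<^sub>R A)"
  by (simp add: psd_iff cadj_scaleR scaleR_matrix_vector_mult cinner_scaleR_right)

text \<open>Kadison--Schwarz inequality \<open>\<Phi>\<^sup>\<dagger>(Y)\<^sup>2 \<le> \<Phi>\<^sup>\<dagger>(Y\<^sup>2)\<close> in expectation, for a trace-nonincreasing
  Kraus map: \<open>R\<^sup>\<dagger>R\<close> is the defect \<open>1 - \<Sigma>\<^sub>k T\<^sub>k\<^sup>\<dagger>T\<^sub>k\<close>. With \<open>X = \<Phi>\<^sup>\<dagger>(Y)\<close> and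
  \<open>C\<^sub>k = Y T\<^sub>k - T\<^sub>k X\<close>, the difference is \<open>\<Sigma>\<^sub>k C\<^sub>k\<^sup>\<dagger>C\<^sub>k + (R X)\<^sup>\<dagger>(R X)\<close>.\<close>

lemma trace_kraus_dual_square_le:
  fixes T :: "'k \<Rightarrow> complex^'n^'m" and A R :: "complex^'n^'n"
  assumes unit: "(\<Sum>k\<in>K. cadj (T k) ** T k) + cadj R ** R = mat 1"
    and Y: "cadj Y = Y" and psd: "psd A"
  shows "Re (trace (A ** kraus_dual K T Y ** kraus_dual K T Y)) \<le> Re (trace (A ** kraus_dual K T (Y ** Y)))"
proof -
  define X where "X = kraus_dual K T Y"
  have X: "cadj X = X"
    by (simp add: X_def cadj_kraus_dual Y)
  define C where "C k = Y ** T k - T k ** X" for k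
  have "cadj (C k) ** C k = cadj (T k) ** Y ** Y ** T k - cadj (T k) ** Y ** T k ** X
      - X ** (cadj (T k) ** Y ** T k) + X ** (cadj (T k) ** T k) ** X" for k
    by (simp add: C_def cadj_diff cadj_mult Y X matrix_diff_ldistrib matrix_diff_rdistrib
        matrix_mul_assoc)
  moreover have "(\<Sum>k\<in>K. cadj (T k) ** Y ** Y ** T k) = kraus_dual K T (Y ** Y)"
    by (simp add: kraus_dual_def matrix_mul_assoc)
  moreover have "(\<Sum>k\<in>K. cadj (T k) ** Y ** T k ** X) = X ** X"
    using matrix_sum_rdistrib[of "\<lambda>k. cadj (T k) ** Y ** T k" K X] by (simp add: X_def kraus_dual_def)
  moreover have "(\<Sum>k\<in>K. X ** (cadj (T k) ** Y ** T k)) = X ** X"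
    using matrix_sum_ldistrib[of X "\<lambda>k. cadj (T k) ** Y ** T k" K] by (simp add: X_def kraus_dual_def)
  moreover have "(\<Sum>k\<in>K. X ** (cadj (T k) ** T k) ** X) = X ** (\<Sum>k\<in>K. cadj (T k) ** T k) ** X"
    by (simp add: matrix_sum_ldistrib matrix_sum_rdistrib)
  ultimately have "(\<Sum>k\<in>K. cadj (C k) ** C k) = kraus_dual K T (Y ** Y) - X ** X - X ** X
      + X ** (\<Sum>k\<in>K. cadj (T k) ** T k) ** X"
    by (simp only: sum.distrib sum_subtractf)
  also have "\<dots> = kraus_dual K T (Y ** Y) - X ** X - cadj (R ** X) ** (R ** X)"
    using unit by (simp add: eq_diff_eq[symmetric] matrix_diff_ldistrib matrix_diff_rdistrib
        cadj_mult X matrix_mul_assoc)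
  finally have "kraus_dual K T (Y ** Y) - X ** X =
      (\<Sum>k\<in>K. cadj (C k) ** C k) + cadj (R ** X) ** (R ** X)"
    by (simp add: algebra_simps)
  then have "0 \<le> Re (trace (A ** (kraus_dual K T (Y ** Y) - X ** X)))"
    by (simp add: matrix_add_ldistrib matrix_sum_ldistrib trace_add trace_sum Re_sum)
      (intro add_nonneg_nonneg sum_nonneg trace_psd_mult_gram_nonneg psd)
  then show ?thesis
    by (simp add: X_def matrix_diff_ldistrib trace_sub matrix_mul_assoc)
qed

lemma linear_Re_trace_kraus_map: "linear (\<lambda>A. Re (trace (kraus_map K T A)))"
  by (rule linearI) (simp_all add: linear_add[OF linear_kraus_map]
      linear_scale[OF linear_kraus_map] trace_add trace_scaleR)

lemma kraus_output_regular:
  fixes T :: "'k \<Rightarrow> complex^'n^'m" and \<rho>\<^sub>o :: "real \<Rightarrow> complex^'m^'m"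
  assumes psd: "\<And>t. psd (\<rho>\<^sub>i t)" and diff: "\<And>t. \<rho>\<^sub>i differentiable (at t)"
    and out: "\<And>t. kraus_map K T (\<rho>\<^sub>i t) = c t *\<^sub>R \<rho>\<^sub>o t" and c: "\<And>t. c t > 0"
    and tr: "\<And>t. trace (\<rho>\<^sub>o t) = 1"
  shows "psd (\<rho>\<^sub>o t)" "\<rho>\<^sub>o differentiable (at t)"
proof -
  have "\<rho>\<^sub>o t = (1 / c t) *\<^sub>R kraus_map K T (\<rho>\<^sub>i t)" for t
    using out[of t] c[of t] by simp
  then have \<rho>\<^sub>o: "\<rho>\<^sub>o = (\<lambda>t. (1 / c t) *\<^sub>R kraus_map K T (\<rho>\<^sub>i t))"
    by auto
  have c_eq: "c = (\<lambda>t. Re (trace (kraus_map K T (\<rho>\<^sub>i t))))"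
    using out tr by (auto simp: fun_eq_iff trace_scaleR)
  show "psd (\<rho>\<^sub>o t)"
    unfolding \<rho>\<^sub>o using c[of t] by (intro psd_scaleR psd_kraus_map psd) simp
  have deriv: "(\<rho>\<^sub>i has_vector_derivative vector_derivative \<rho>\<^sub>i (at t)) (at t)"
    using diff vector_derivative_works by blast
  have "c differentiable (at t)"
    unfolding c_eq
    by (rule differentiableI_vector[OF linear_has_vector_derivative[OF linear_Re_trace_kraus_map deriv]])
  moreover have "(\<lambda>t. kraus_map K T (\<rho>\<^sub>i t)) differentiable (at t)"
    by (rule differentiableI_vector[OF linear_has_vector_derivative[OF linear_kraus_map deriv]])
  ultimately show "\<rho>\<^sub>o differentiable (at t)"
    unfolding \<rho>\<^sub>o using c[of t] by (intro differentiable_scaleR differentiable_divide) auto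
qed

lemma trace_derivative_zero:
  fixes \<rho> :: "real \<Rightarrow> complex^'n^'n"
  assumes "(\<rho> has_vector_derivative D) (at x)" "\<And>t. trace (\<rho> t) = 1"
  shows "trace D = 0"
proof -
  have "linear (trace :: complex^'n^'n \<Rightarrow> complex)"
    by (rule linearI) (simp_all add: trace_add trace_scaleR scaleR_complex)
  from linear_has_vector_derivative[OF this assms(1)]
  have "((\<lambda>t. 1) has_vector_derivative trace D) (at x)"
    using assms(2) by simp
  then show ?thesis
    using has_vector_derivative_const vector_derivative_unique_at by blast
qed

text \<open>Differentiating \<open>\<Phi>(\<rho>\<^sub>i) = c \<rho>\<^sub>o\<close> gives \<open>\<Phi>(\<rho>\<^sub>i') = c \<rho>\<^sub>o' + c' \<rho>\<^sub>o\<close>; the second term is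
  orthogonal to the SLD \<open>Y\<close> of \<open>\<rho>\<^sub>o\<close> because \<open>Tr \<rho>\<^sub>o' = 0\<close>.\<close>

lemma trace_derivative_mult_kraus_dual_sld:
  fixes T :: "'k \<Rightarrow> complex^'n^'m" and \<rho>\<^sub>o :: "real \<Rightarrow> complex^'m^'m"
  assumes out: "\<And>t. kraus_map K T (\<rho>\<^sub>i t) = c t *\<^sub>R \<rho>\<^sub>o t" and tr: "\<And>t. trace (\<rho>\<^sub>o t) = 1"
    and D\<^sub>i: "(\<rho>\<^sub>i has_vector_derivative D\<^sub>i) (at x)" and D\<^sub>o: "(\<rho>\<^sub>o has_vector_derivative D\<^sub>o) (at x)"
    and Y: "D\<^sub>o = (1/2) *\<^sub>R (Y ** \<rho>\<^sub>o x + \<rho>\<^sub>o x ** Y)"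
  shows "trace (D\<^sub>i ** kraus_dual K T Y) = of_real (c x) * trace (\<rho>\<^sub>o x ** Y ** Y)"
proof -
  define c' where "c' = Re (trace (kraus_map K T D\<^sub>i))"
  have "c = (\<lambda>t. Re (trace (kraus_map K T (\<rho>\<^sub>i t))))"
    using out tr by (auto simp: fun_eq_iff trace_scaleR)
  then have "(c has_vector_derivative c') (at x)"
    using linear_has_vector_derivative[OF linear_Re_trace_kraus_map D\<^sub>i] by (simp add: c'_def)
  then have "((\<lambda>t. c t *\<^sub>R \<rho>\<^sub>o t) has_vector_derivative c x *\<^sub>R D\<^sub>o + c' *\<^sub>R \<rho>\<^sub>o x) (at x)"
    using D\<^sub>o by (intro has_vector_derivative_scaleR)
      (auto simp: has_real_derivative_iff_has_vector_derivative)
  moreover have "((\<lambda>t. c t *\<^sub>R \<rho>\<^sub>o t) has_vector_derivative kraus_map K T D\<^sub>i) (at x)"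
    using linear_has_vector_derivative[OF linear_kraus_map[of K T] D\<^sub>i] out by simp
  ultimately have \<Phi>D: "kraus_map K T D\<^sub>i = c x *\<^sub>R D\<^sub>o + c' *\<^sub>R \<rho>\<^sub>o x"
    using vector_derivative_unique_at by blast
  have "trace (\<rho>\<^sub>o x ** Y) = 0"
    using trace_derivative_zero[OF D\<^sub>o tr] trace_mul_sym[of Y "\<rho>\<^sub>o x"]
    by (simp add: Y trace_scaleR trace_add)
  moreover have "trace (D\<^sub>o ** Y) = trace (\<rho>\<^sub>o x ** Y ** Y)"
    using trace_sld_mult[of Y "\<rho>\<^sub>o x"] Y by simp
  ultimately show ?thesis
    by (simp flip: trace_kraus_map_mult)
      (simp add: \<Phi>D matrix_add_rdistrib matrix_scaleR_left trace_add trace_scaleR)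
qed

text \<open>The SLD \<open>Y\<close> of the output pulls back to the test operator \<open>\<Phi>\<^sup>\<dagger>(Y)\<close> in the variational
  bound for the input.\<close>

lemma qfi_kraus_map_mono:
  fixes T :: "'k \<Rightarrow> complex^'n^'m" and R :: "complex^'n^'n" and \<rho>\<^sub>o :: "real \<Rightarrow> complex^'m^'m"
  assumes unit: "(\<Sum>k\<in>K. cadj (T k) ** T k) + cadj R ** R = mat 1"
    and psd: "\<And>t. psd (\<rho>\<^sub>i t)" and diff: "\<And>t. \<rho>\<^sub>i differentiable (at t)"
    and out: "\<And>t. kraus_map K T (\<rho>\<^sub>i t) = c t *\<^sub>R \<rho>\<^sub>o t" and c: "\<And>t. c t > 0"
    and tr: "\<And>t. trace (\<rho>\<^sub>o t) = 1"
  shows "c x * qfi \<rho>\<^sub>o x \<le> qfi \<rho>\<^sub>i x"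
proof -
  obtain D\<^sub>i L where D\<^sub>i: "(\<rho>\<^sub>i has_vector_derivative D\<^sub>i) (at x)"
    and L: "cadj L = L" "D\<^sub>i = (1/2) *\<^sub>R (L ** \<rho>\<^sub>i x + \<rho>\<^sub>i x ** L)"
    and qfi_in: "qfi \<rho>\<^sub>i x = Re (trace (\<rho>\<^sub>i x ** L ** L))"
    by (rule qfi_sld[OF psd diff])
  obtain D\<^sub>o Y where D\<^sub>o: "(\<rho>\<^sub>o has_vector_derivative D\<^sub>o) (at x)"
    and Y: "cadj Y = Y" "D\<^sub>o = (1/2) *\<^sub>R (Y ** \<rho>\<^sub>o x + \<rho>\<^sub>o x ** Y)"
    and qfi_out: "qfi \<rho>\<^sub>o x = Re (trace (\<rho>\<^sub>o x ** Y ** Y))"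
    by (rule qfi_sld[OF kraus_output_regular[OF psd diff out c tr]])
  define X where "X = kraus_dual K T Y"
  have "Re (trace (D\<^sub>i ** X)) = c x * qfi \<rho>\<^sub>o x"
    using trace_derivative_mult_kraus_dual_sld[OF out tr D\<^sub>i D\<^sub>o Y(2)] by (simp add: X_def qfi_out)
  moreover have "Re (trace (\<rho>\<^sub>i x ** X ** X)) \<le> Re (trace (\<rho>\<^sub>i x ** kraus_dual K T (Y ** Y)))"
    unfolding X_def by (rule trace_kraus_dual_square_le[OF unit Y(1) psd])
  moreover have "trace (\<rho>\<^sub>i x ** kraus_dual K T (Y ** Y)) = of_real (c x) * trace (\<rho>\<^sub>o x ** Y ** Y)"
    by (simp add: out matrix_scaleR_left trace_scaleR matrix_mul_assoc flip: trace_kraus_map_mult)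
  moreover have "2 * Re (trace (D\<^sub>i ** X)) - Re (trace (\<rho>\<^sub>i x ** X ** X)) \<le> qfi \<rho>\<^sub>i x"
    unfolding qfi_in
    by (rule sld_variational_bound[OF psd L(1) _ L(2)]) (simp add: X_def cadj_kraus_dual Y(1))
  ultimately show ?thesis
    by (simp add: qfi_out)
qed

section \<open>Operators on system and ancilla\<close>

lemma projector_complement_unit:
  assumes "cadj Q = Q" "Q ** Q = Q"
  shows "Q + cadj (mat 1 - Q) ** (mat 1 - Q) = mat 1"
  using assms by (simp add: cadj_diff matrix_diff_ldistrib matrix_diff_rdistrib)

definition cscale :: "complex \<Rightarrow> complex^'n^'m \<Rightarrow> complex^'n^'m" where
  "cscale c A = (\<chi> i j. c * A $ i $ j)"

definition outer :: "complex^'m \<Rightarrow> complex^'n \<Rightarrow> complex^'n^'m" where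
  "outer u v = (\<chi> i j. u $ i * cnj (v $ j))"

text \<open>\<open>B \<otimes> |v\<rangle>\<close>, an operator from the system to system \<otimes> ancilla.\<close>

definition tensor_ket :: "complex^'n^'n \<Rightarrow> complex^'a \<Rightarrow> complex^'n^('n \<times> 'a)" where
  "tensor_ket B v = (\<chi> q k. B $ fst q $ k * v $ snd q)"

lemma cscale_nth [simp]: "cscale c A $ i $ j = c * A $ i $ j"
  by (simp add: cscale_def)

lemma outer_nth [simp]: "outer u v $ i $ j = u $ i * cnj (v $ j)"
  by (simp add: outer_def)

lemma tensor_nth [simp]: "tensor A B $ p $ q = A $ fst p $ fst q * B $ snd p $ snd q"
  by (simp add: tensor_def)

lemma ket_bra_eq_outer: "ket_bra v = outer v v"
  by (simp add: ket_bra_def outer_def)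

lemma cscale_0 [simp]: "cscale 0 A = 0"
  by (simp add: vec_eq_iff)

lemma cscale_1 [simp]: "cscale 1 A = A"
  by (simp add: vec_eq_iff)

lemma cscale_of_real: "cscale (of_real r) A = r *\<^sub>R A"
  by (simp add: vec_eq_iff scaleR_complex)

lemma cscale_cscale: "cscale a (cscale b A) = cscale (a * b) A"
  by (simp add: vec_eq_iff mult_ac)

lemma cscale_sum_left: "(\<Sum>k\<in>K. cscale (c k) A) = cscale (\<Sum>k\<in>K. c k) A"
  by (induction K rule: infinite_finite_induct) (auto simp: vec_eq_iff distrib_right)

lemma matrix_cscale_left: "cscale c A ** B = cscale c (A ** B)"
  by (simp add: vec_eq_iff matrix_matrix_mult_def sum_distrib_left mult_ac)

lemma cadj_outer: "cadj (outer u v) = outer v u"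
  by (simp add: vec_eq_iff mult.commute)

lemma cadj_ket_bra: "cadj (ket_bra v) = ket_bra v"
  by (simp add: ket_bra_eq_outer cadj_outer)

lemma trace_outer: "trace (outer u v) = cinner v u"
  by (simp add: trace_def cinner_def mult.commute)

lemma outer_mult_outer: "outer u v ** outer w z = cscale (cinner v w) (outer u z)"
  by (simp add: vec_eq_iff matrix_matrix_mult_def cinner_def sum_distrib_left sum_distrib_right
      mult_ac)

lemma outer_sandwich: "outer u v ** A ** outer w z = cscale (cinner v (A *v w)) (outer u z)"
  apply (simp add: vec_eq_iff matrix_matrix_mult_def matrix_vector_mult_def cinner_def
      sum_distrib_left sum_distrib_right mult_ac)
  apply (intro allI)
  apply (rule sum.swap)
  done

lemma matrix_vector_mult_axis: "(A *v axis i 1) $ j = (A::complex^'n^'m) $ j $ i"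
proof -
  have "(\<Sum>k\<in>UNIV. A $ j $ k * (axis i 1::complex^'n) $ k) = (\<Sum>k\<in>UNIV. if i = k then A $ j $ k else 0)"
    by (rule sum.cong) (simp_all add: axis_def)
  then show ?thesis
    by (simp add: matrix_vector_mult_def)
qed

text \<open>The trace-and-replace channel \<open>A \<mapsto> Tr A \<cdot> |\<phi>\<rangle>\<langle>\<phi>|\<close>, with Kraus operators \<open>|\<phi>\<rangle>\<langle>i|\<close>.\<close>

lemma sum_outer_axis_sandwich:
  "(\<Sum>i\<in>UNIV. outer \<phi> (axis i 1) ** A ** outer (axis i 1) \<phi>) = cscale (trace A) (outer \<phi> \<phi>)"
  by (simp add: outer_sandwich cinner_axis_left matrix_vector_mult_axis cscale_sum_left trace_def)

lemma sum_outer_axis: "(\<Sum>i\<in>UNIV. outer (axis i 1) (axis i 1)) = (mat 1 :: complex^'n^'n)"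
proof -
  have "(\<Sum>i\<in>UNIV. outer (axis i 1) (axis i 1) :: complex^'n^'n) $ p $ q = mat 1 $ p $ q" for p q
  proof -
    have "(\<Sum>i\<in>UNIV. outer (axis i 1) (axis i 1) :: complex^'n^'n) $ p $ q
        = (\<Sum>i\<in>UNIV. (if p = i \<and> q = i then 1 else 0))"
      by (simp add: sum_component axis_def) (intro sum.cong, auto)
    also have "\<dots> = mat 1 $ p $ q"
      by (cases "p = q") (auto simp: mat_def intro!: sum.neutral)
    finally show ?thesis .
  qed
  then show ?thesis
    by (simp add: vec_eq_iff)
qed

lemma sum_prod_UNIV:
  "(\<Sum>r\<in>(UNIV::('a::finite \<times> 'b::finite) set). g r) = (\<Sum>k\<in>UNIV. \<Sum>b\<in>UNIV. g (k, b))"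
  by (simp add: UNIV_Times_UNIV[symmetric] sum.cartesian_product case_prod_beta' del: UNIV_Times_UNIV)

lemma tensor_mult: "tensor A B ** tensor C D = tensor (A ** C) (B ** D)"
proof -
  have "(tensor A B ** tensor C D) $ p $ q = tensor (A ** C) (B ** D) $ p $ q" for p q
    by (simp add: matrix_matrix_mult_def sum_prod_UNIV sum_product mult_ac)
  then show ?thesis
    by (simp add: vec_eq_iff)
qed

lemma cadj_tensor: "cadj (tensor A B) = tensor (cadj A) (cadj B)"
  by (simp add: vec_eq_iff)

lemma trace_tensor: "trace (tensor A B) = trace A * trace B"
  by (simp add: trace_def sum_prod_UNIV sum_product)

lemma tensor_add_left: "tensor (A + A') B = tensor A B + tensor A' B"
  by (simp add: vec_eq_iff distrib_right)

lemma tensor_scaleR_left: "tensor (c *\<^sub>R A) B = c *\<^sub>R tensor A B"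
  by (simp add: vec_eq_iff scaleR_complex)

lemma tensor_zero_left [simp]: "tensor 0 B = 0"
  by (simp add: vec_eq_iff)

lemma tensor_zero_right [simp]: "tensor A 0 = 0"
  by (simp add: vec_eq_iff)

lemma tensor_sum_left: "tensor (\<Sum>k\<in>K. A k) B = (\<Sum>k\<in>K. tensor (A k) B)"
  by (induction K rule: infinite_finite_induct) (auto simp: tensor_add_left)

lemma tensor_sum_right: "tensor A (\<Sum>k\<in>K. B k) = (\<Sum>k\<in>K. tensor A (B k))"
  by (induction K rule: infinite_finite_induct) (auto simp: vec_eq_iff distrib_left sum_distrib_left)

lemma tensor_sandwich: "tensor A B ** tensor X Y ** cadj (tensor A B) = tensor (A ** X ** cadj A) (B ** Y ** cadj B)"
  by (simp add: cadj_tensor tensor_mult)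

lemma cadj_tensor_ket_mult: "cadj (tensor_ket B v) ** tensor_ket C w = cscale (cinner v w) (cadj B ** C)"
proof -
  have "(cadj (tensor_ket B v) ** tensor_ket C w) $ k $ l = cscale (cinner v w) (cadj B ** C) $ k $ l"
    for k l
    by (simp add: tensor_ket_def matrix_matrix_mult_def sum_prod_UNIV cinner_def sum_product
        mult_ac) (rule sum.swap)
  then show ?thesis
    by (simp add: vec_eq_iff)
qed

lemma tensor_ket_sandwich:
  "tensor_ket B v ** A ** cadj (tensor_ket C w) = tensor (B ** A ** cadj C) (outer v w)"
proof -
  have "(tensor_ket B v ** A ** cadj (tensor_ket C w)) $ p $ q
      = tensor (B ** A ** cadj C) (outer v w) $ p $ q" for p q
    by (simp add: tensor_ket_def matrix_matrix_mult_def sum_distrib_left sum_distrib_right mult_ac)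
  then show ?thesis
    by (simp add: vec_eq_iff)
qed

lemma qfi_tensor_ket_bra:
  assumes psd: "\<And>t. psd (\<rho> t)" and diff: "\<rho> differentiable (at x)" and v: "cinner v v = 1"
  shows "qfi (\<lambda>t. tensor (\<rho> t) (ket_bra v)) x = qfi \<rho> x"
proof -
  obtain D L where D: "(\<rho> has_vector_derivative D) (at x)"
    and L: "cadj L = L" "D = (1/2) *\<^sub>R (L ** \<rho> x + \<rho> x ** L)"
    and qfi: "qfi \<rho> x = Re (trace (\<rho> x ** L ** L))"
    by (rule qfi_sld[OF psd diff])
  have P: "ket_bra v ** ket_bra v = ket_bra v" "trace (ket_bra v) = 1"
    using v by (simp_all add: ket_bra_eq_outer outer_mult_outer trace_outer)
  have "tensor (\<rho> x) (ket_bra v) = kraus_map {()} (\<lambda>_. tensor_ket (mat 1) v) (\<rho> x)"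
    by (simp add: kraus_map_def tensor_ket_sandwich ket_bra_eq_outer)
  then have "psd (tensor (\<rho> x) (ket_bra v))"
    by (simp add: psd_kraus_map psd)
  moreover have "linear (\<lambda>A. tensor A (ket_bra v))"
    by (rule linearI) (simp_all add: tensor_add_left tensor_scaleR_left)
  then have "((\<lambda>t. tensor (\<rho> t) (ket_bra v)) has_vector_derivative tensor D (ket_bra v)) (at x)"
    by (rule linear_has_vector_derivative[OF _ D])
  moreover have "cadj (tensor L (ket_bra v)) = tensor L (ket_bra v)"
    by (simp add: cadj_tensor L(1) cadj_ket_bra)
  moreover have "tensor D (ket_bra v) = (1/2) *\<^sub>R (tensor L (ket_bra v) ** tensor (\<rho> x) (ket_bra v)
      + tensor (\<rho> x) (ket_bra v) ** tensor L (ket_bra v))"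
    by (simp add: L(2) tensor_mult P tensor_add_left tensor_scaleR_left)
  ultimately have "qfi (\<lambda>t. tensor (\<rho> t) (ket_bra v)) x
      = Re (trace (tensor (\<rho> x) (ket_bra v) ** tensor L (ket_bra v) ** tensor L (ket_bra v)))"
    by (rule qfi_eq_sld)
  then show ?thesis
    by (simp add: tensor_mult P trace_tensor qfi)
qed

section \<open>Selection measurements\<close>

locale selection_measurement =
  fixes \<rho> :: "real \<Rightarrow> 'n::finite cmat"
    and J :: nat and Jk :: "nat \<Rightarrow> nat" and M :: "nat \<Rightarrow> nat \<Rightarrow> 'n cmat"
    and S :: "nat set"
    and f :: "nat \<Rightarrow> complex^'a::finite" and f0 :: "complex^'a"
    and \<phi> :: "complex^'n"
    and p :: "nat \<Rightarrow> real \<Rightarrow> real" and pS pF :: "real \<Rightarrow> real"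
    and \<sigma> :: "nat \<Rightarrow> real \<Rightarrow> 'n cmat"
    and \<sigma>QA \<sigma>QA_S \<sigma>QA_cond :: "real \<Rightarrow> ('n \<times> 'a) cmat"
  assumes dens: "\<And>t. density_op (\<rho> t)"
    and diff: "\<And>t. \<rho> differentiable (at t)"
    and complete: "(\<Sum>\<alpha>\<in>{1..J}. \<Sum>j<Jk \<alpha>. adj (M \<alpha> j) ** M \<alpha> j) = mat 1"
    and p_def: "\<And>\<alpha> t. p \<alpha> t = Re (trace (kraus_op (M \<alpha>) (Jk \<alpha>) (\<rho> t)))"
    and p_pos: "\<And>\<alpha> t. \<alpha> \<in> {1..J} \<Longrightarrow> p \<alpha> t > 0"
    and \<sigma>_def: "\<And>\<alpha> t. \<sigma> \<alpha> t = (1 / p \<alpha> t) *\<^sub>R kraus_op (M \<alpha>) (Jk \<alpha>) (\<rho> t)"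
    and S_sub: "S \<subseteq> {1..J}"
    and pS_def: "\<And>t. pS t = (\<Sum>\<alpha>\<in>S. p \<alpha> t)"
    and pF_def: "\<And>t. pF t = 1 - pS t"
    and pS_pos: "\<And>t. pS t > 0"
    and f_orth: "\<And>\<alpha> \<beta>. \<alpha> \<in> {1..J} \<Longrightarrow> \<beta> \<in> {1..J} \<Longrightarrow>
                    cinner (f \<alpha>) (f \<beta>) = (if \<alpha> = \<beta> then 1 else 0)"
    and f0_norm: "cinner f0 f0 = 1"
    and f0_orth: "\<And>\<alpha>. \<alpha> \<in> S \<Longrightarrow> cinner f0 (f \<alpha>) = 0"
    and \<phi>_norm: "cinner \<phi> \<phi> = 1"
    and \<sigma>QA_def: "\<And>t. \<sigma>QA t = (\<Sum>\<alpha>\<in>{1..J}. p \<alpha> t *\<^sub>R tensor (\<sigma> \<alpha> t) (ket_bra (f \<alpha>)))"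
    and \<sigma>QA_S_def: "\<And>t. \<sigma>QA_S t =
        (\<Sum>\<alpha>\<in>S. p \<alpha> t *\<^sub>R tensor (\<sigma> \<alpha> t) (ket_bra (f \<alpha>)))
          + pF t *\<^sub>R tensor (ket_bra \<phi>) (ket_bra f0)"
    and \<sigma>QA_cond_def: "\<And>t. \<sigma>QA_cond t =
        (\<Sum>\<alpha>\<in>S. (p \<alpha> t / pS t) *\<^sub>R tensor (\<sigma> \<alpha> t) (ket_bra (f \<alpha>)))"
begin

lemma psd_\<rho>: "psd (\<rho> t)" and trace_\<rho>: "trace (\<rho> t) = 1"
  using dens by (simp_all add: density_op_def)

lemma ket_bra_f_mult:
  "\<alpha> \<in> {1..J} \<Longrightarrow> \<beta> \<in> {1..J} \<Longrightarrow>
    ket_bra (f \<alpha>) ** ket_bra (f \<beta>) = (if \<alpha> = \<beta> then ket_bra (f \<alpha>) else 0)"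
  by (simp add: ket_bra_eq_outer outer_mult_outer f_orth)

lemma trace_ket_bra_f: "\<alpha> \<in> {1..J} \<Longrightarrow> trace (ket_bra (f \<alpha>)) = 1"
  by (simp add: ket_bra_eq_outer trace_outer f_orth)

lemma trace_kraus_op: "trace (kraus_op (M \<alpha>) (Jk \<alpha>) (\<rho> t)) = of_real (p \<alpha> t)"
proof -
  have "cadj (kraus_op (M \<alpha>) (Jk \<alpha>) (\<rho> t)) = kraus_op (M \<alpha>) (Jk \<alpha>) (\<rho> t)"
    using psd_kraus_map[OF psd_\<rho>, of "{..<Jk \<alpha>}" "M \<alpha>" t]
    by (simp add: kraus_op_eq_kraus_map psd_iff)
  then show ?thesis
    by (simp add: p_def trace_real_if_hermitian[symmetric])
qed

lemma kraus_op_eq_scaleR_\<sigma>: "\<alpha> \<in> {1..J} \<Longrightarrow> kraus_op (M \<alpha>) (Jk \<alpha>) (\<rho> t) = p \<alpha> t *\<^sub>R \<sigma> \<alpha> t"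
  using p_pos[of \<alpha> t] by (simp add: \<sigma>_def)

lemma trace_\<sigma>: "\<alpha> \<in> {1..J} \<Longrightarrow> trace (\<sigma> \<alpha> t) = 1"
  using p_pos[of \<alpha> t] trace_kraus_op[of \<alpha> t] by (simp add: \<sigma>_def trace_scaleR)

lemma sum_p_eq_1: "(\<Sum>\<alpha>\<in>{1..J}. p \<alpha> t) = 1"
proof -
  have "(\<Sum>\<alpha>\<in>{1..J}. of_real (p \<alpha> t)) = trace (\<rho> t ** mat 1)"
    by (simp add: flip: complete trace_kraus_op)
      (simp add: kraus_op_eq_kraus_map trace_kraus_map adj_eq_cadj matrix_sum_ldistrib trace_sum)
  then show ?thesis
    using trace_\<rho>[of t] by (metis matrix_mul_rid of_real_eq_1_iff of_real_sum)
qed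

lemma \<sigma>QA_eq_sum_kraus_op: "\<sigma>QA t = (\<Sum>\<alpha>\<in>{1..J}. tensor (kraus_op (M \<alpha>) (Jk \<alpha>) (\<rho> t)) (ket_bra (f \<alpha>)))"
  by (simp add: \<sigma>QA_def kraus_op_eq_scaleR_\<sigma> tensor_scaleR_left)

definition record_index :: "(nat \<times> nat) set" where
  "record_index = Sigma {1..J} (\<lambda>\<alpha>. {..<Jk \<alpha>})"

definition record_op :: "nat \<times> nat \<Rightarrow> complex^'n^('n \<times> 'a)" where
  "record_op = (\<lambda>(\<alpha>, j). tensor_ket (M \<alpha> j) (f \<alpha>))"

lemma record_unit: "(\<Sum>k\<in>record_index. cadj (record_op k) ** record_op k) = mat 1"
proof -
  have "(\<Sum>k\<in>record_index. cadj (record_op k) ** record_op k)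
      = (\<Sum>\<alpha>\<in>{1..J}. \<Sum>j<Jk \<alpha>. cadj (record_op (\<alpha>, j)) ** record_op (\<alpha>, j))"
    unfolding record_index_def by (subst sum.Sigma) auto
  also have "\<dots> = (\<Sum>\<alpha>\<in>{1..J}. \<Sum>j<Jk \<alpha>. adj (M \<alpha> j) ** M \<alpha> j)"
    by (intro sum.cong refl) (simp add: record_op_def cadj_tensor_ket_mult f_orth adj_eq_cadj)
  also have "\<dots> = mat 1"
    by (rule complete)
  finally show ?thesis .
qed

lemma record_output: "kraus_map record_index record_op (\<rho> t) = \<sigma>QA t"
proof -
  have "kraus_map record_index record_op (\<rho> t)
      = (\<Sum>\<alpha>\<in>{1..J}. \<Sum>j<Jk \<alpha>. record_op (\<alpha>, j) ** \<rho> t ** cadj (record_op (\<alpha>, j)))"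
    unfolding kraus_map_def record_index_def by (subst sum.Sigma) auto
  then show ?thesis
    by (simp add: \<sigma>QA_eq_sum_kraus_op record_op_def tensor_ket_sandwich kraus_op_eq_kraus_map kraus_map_def
        tensor_sum_left ket_bra_eq_outer)
qed

lemma trace_\<sigma>QA: "trace (\<sigma>QA t) = 1"
  using trace_kraus_map[of record_index record_op "\<rho> t"]
  by (simp add: record_output record_unit trace_\<rho>)

lemma psd_\<sigma>QA: "psd (\<sigma>QA t)" and differentiable_\<sigma>QA: "\<sigma>QA differentiable (at t)"
  using kraus_output_regular[OF psd_\<rho> diff, where K = record_index and T = record_op and c = "\<lambda>_. 1" and \<rho>\<^sub>o = \<sigma>QA]
    record_output trace_\<sigma>QA
  by auto

lemma qfi_\<sigma>QA_le: "qfi \<sigma>QA x \<le> qfi \<rho> x"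
  using qfi_kraus_map_mono[OF _ psd_\<rho> diff, where K = record_index and T = record_op and R = 0 and c = "\<lambda>_. 1" and \<rho>\<^sub>o = \<sigma>QA]
    record_unit record_output trace_\<sigma>QA
  by simp


definition ancilla_proj :: "nat set \<Rightarrow> complex^'a^'a" where
  "ancilla_proj A = (\<Sum>\<alpha>\<in>A. ket_bra (f \<alpha>))"

lemma cadj_ancilla_proj: "cadj (ancilla_proj A) = ancilla_proj A"
  by (simp add: ancilla_proj_def cadj_sum ket_bra_eq_outer cadj_outer)

lemma ancilla_proj_mult_ket_bra:
  assumes "A \<subseteq> {1..J}" "\<beta> \<in> {1..J}"
  shows "ancilla_proj A ** ket_bra (f \<beta>) = (if \<beta> \<in> A then ket_bra (f \<beta>) else 0)"
proof -
  have "ancilla_proj A ** ket_bra (f \<beta>) = (\<Sum>\<alpha>\<in>A. if \<alpha> = \<beta> then ket_bra (f \<alpha>) else 0)"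
    unfolding ancilla_proj_def matrix_sum_rdistrib
    using assms by (intro sum.cong) (auto simp: ket_bra_f_mult)
  also have "\<dots> = (if \<beta> \<in> A then ket_bra (f \<beta>) else 0)"
    using finite_subset[OF assms(1)] by (simp add: sum.delta')
  finally show ?thesis .
qed

lemma ket_bra_mult_ancilla_proj:
  assumes "A \<subseteq> {1..J}" "\<beta> \<in> {1..J}"
  shows "ket_bra (f \<beta>) ** ancilla_proj A = (if \<beta> \<in> A then ket_bra (f \<beta>) else 0)"
  using arg_cong[OF ancilla_proj_mult_ket_bra[OF assms], of cadj]
  by (simp add: cadj_mult cadj_ancilla_proj ket_bra_eq_outer cadj_outer if_distrib)

lemma ancilla_proj_idem:
  assumes "A \<subseteq> {1..J}"
  shows "ancilla_proj A ** ancilla_proj A = ancilla_proj A"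
proof -
  have "ancilla_proj A ** ancilla_proj A = (\<Sum>\<beta>\<in>A. ancilla_proj A ** ket_bra (f \<beta>))"
    by (simp only: ancilla_proj_def matrix_sum_ldistrib)
  also have "\<dots> = (\<Sum>\<beta>\<in>A. ket_bra (f \<beta>))"
    using ancilla_proj_mult_ket_bra[OF assms] assms by (intro sum.cong refl) auto
  finally show ?thesis
    by (simp only: ancilla_proj_def)
qed

text \<open>Discarding the unfavourable outcomes: a favourable \<open>\<alpha>\<close> is kept by the single operator
  \<open>1 \<otimes> |f\<^sub>\<alpha>\<rangle>\<langle>f\<^sub>\<alpha>|\<close> (placed at an arbitrary index \<open>i\<close>, all other indices give \<open>0\<close>); an
  unfavourable one is replaced by \<open>|\<phi>\<rangle>\<langle>\<phi>| \<otimes> |f\<^sub>0\<rangle>\<langle>f\<^sub>0|\<close> via \<open>|\<phi>\<rangle>\<langle>i| \<otimes> |f\<^sub>0\<rangle>\<langle>f\<^sub>\<alpha>|\<close>.\<close>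

definition discard_op :: "nat \<times> 'n \<Rightarrow> ('n \<times> 'a) cmat" where
  "discard_op = (\<lambda>(\<alpha>, i). if \<alpha> \<in> S
     then (if i = undefined then tensor (mat 1) (ket_bra (f \<alpha>)) else 0)
     else tensor (outer \<phi> (axis i 1)) (outer f0 (f \<alpha>)))"

lemma discard_op_gram:
  assumes "\<alpha> \<in> {1..J}"
  shows "(\<Sum>i\<in>UNIV. cadj (discard_op (\<alpha>, i)) ** discard_op (\<alpha>, i)) = tensor (mat 1) (ket_bra (f \<alpha>))"
proof (cases "\<alpha> \<in> S")
  case True
  have "cadj (discard_op (\<alpha>, i)) ** discard_op (\<alpha>, i)
      = (if i = undefined then tensor (mat 1) (ket_bra (f \<alpha>)) else 0)" for i
    using True by (simp add: discard_op_def cadj_tensor tensor_mult cadj_ket_bra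
        ket_bra_f_mult[OF assms assms])
  then show ?thesis
    by simp
next
  case False
  then show ?thesis
    by (simp add: discard_op_def cadj_tensor cadj_outer tensor_mult outer_mult_outer \<phi>_norm f0_norm
        ket_bra_eq_outer sum_outer_axis flip: tensor_sum_left)
qed

lemma discard_unit:
  "(\<Sum>k\<in>{1..J} \<times> UNIV. cadj (discard_op k) ** discard_op k)
    + cadj (mat 1 - tensor (mat 1) (ancilla_proj {1..J})) ** (mat 1 - tensor (mat 1) (ancilla_proj {1..J}))
    = mat 1"
proof -
  have "(\<Sum>k\<in>{1..J} \<times> UNIV. cadj (discard_op k) ** discard_op k)
      = (\<Sum>\<alpha>\<in>{1..J}. \<Sum>i\<in>UNIV. cadj (discard_op (\<alpha>, i)) ** discard_op (\<alpha>, i))"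
    by (subst sum.cartesian_product) (simp add: case_prod_beta')
  also have "\<dots> = (\<Sum>\<alpha>\<in>{1..J}. tensor (mat 1) (ket_bra (f \<alpha>)))"
    by (intro sum.cong refl discard_op_gram)
  also have "\<dots> = tensor (mat 1) (ancilla_proj {1..J})"
    by (simp only: ancilla_proj_def tensor_sum_right)
  finally show ?thesis
    by (simp add: projector_complement_unit cadj_tensor cadj_ancilla_proj tensor_mult ancilla_proj_idem)
qed


lemma discard_output_kept:
  assumes "\<alpha> \<in> S"
  shows "(\<Sum>i\<in>UNIV. discard_op (\<alpha>, i) ** \<sigma>QA t ** cadj (discard_op (\<alpha>, i)))
    = p \<alpha> t *\<^sub>R tensor (\<sigma> \<alpha> t) (ket_bra (f \<alpha>))"
proof -
  have \<alpha>: "\<alpha> \<in> {1..J}"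
    using assms S_sub by auto
  have "tensor (mat 1) (ket_bra (f \<alpha>)) ** \<sigma>QA t ** tensor (mat 1) (ket_bra (f \<alpha>))
      = (\<Sum>\<beta>\<in>{1..J}. tensor (kraus_op (M \<beta>) (Jk \<beta>) (\<rho> t))
          (ket_bra (f \<alpha>) ** ket_bra (f \<beta>) ** ket_bra (f \<alpha>)))"
    by (simp add: \<sigma>QA_eq_sum_kraus_op matrix_sum_ldistrib matrix_sum_rdistrib tensor_mult)
  also have "\<dots> = (\<Sum>\<beta>\<in>{1..J}. if \<beta> = \<alpha> then tensor (kraus_op (M \<alpha>) (Jk \<alpha>) (\<rho> t)) (ket_bra (f \<alpha>)) else 0)"
    using ket_bra_f_mult[OF \<alpha>] ket_bra_f_mult[OF \<alpha> \<alpha>] by (intro sum.cong refl) auto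
  also have "\<dots> = p \<alpha> t *\<^sub>R tensor (\<sigma> \<alpha> t) (ket_bra (f \<alpha>))"
    using \<alpha> by (simp add: kraus_op_eq_scaleR_\<sigma> tensor_scaleR_left)
  moreover have "discard_op (\<alpha>, i) ** \<sigma>QA t ** cadj (discard_op (\<alpha>, i)) = (if i = undefined
      then tensor (mat 1) (ket_bra (f \<alpha>)) ** \<sigma>QA t ** tensor (mat 1) (ket_bra (f \<alpha>)) else 0)" for i
    using assms by (simp add: discard_op_def cadj_tensor cadj_ket_bra)
  ultimately show ?thesis
    by simp
qed

lemma discard_output_erased:
  assumes \<alpha>: "\<alpha> \<in> {1..J}" and "\<alpha> \<notin> S"
  shows "(\<Sum>i\<in>UNIV. discard_op (\<alpha>, i) ** \<sigma>QA t ** cadj (discard_op (\<alpha>, i)))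
    = p \<alpha> t *\<^sub>R tensor (ket_bra \<phi>) (ket_bra f0)"
proof -
  have "discard_op (\<alpha>, i) ** \<sigma>QA t ** cadj (discard_op (\<alpha>, i))
      = (\<Sum>\<beta>\<in>{1..J}. tensor (outer \<phi> (axis i 1) ** kraus_op (M \<beta>) (Jk \<beta>) (\<rho> t) ** outer (axis i 1) \<phi>)
          (outer f0 (f \<alpha>) ** ket_bra (f \<beta>) ** outer (f \<alpha>) f0))" for i
    using assms by (simp add: discard_op_def \<sigma>QA_eq_sum_kraus_op matrix_sum_ldistrib matrix_sum_rdistrib
        tensor_sandwich cadj_outer)
  also have "\<dots> i = tensor (outer \<phi> (axis i 1) ** kraus_op (M \<alpha>) (Jk \<alpha>) (\<rho> t) ** outer (axis i 1) \<phi>)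
      (ket_bra f0)" for i
  proof -
    have "outer f0 (f \<alpha>) ** ket_bra (f \<beta>) ** outer (f \<alpha>) f0 = (if \<beta> = \<alpha> then ket_bra f0 else 0)"
      if "\<beta> \<in> {1..J}" for \<beta>
      using f_orth[OF \<alpha> that] f_orth[OF that \<alpha>]
      by (simp add: ket_bra_eq_outer outer_mult_outer matrix_cscale_left cscale_cscale)
    then have "(\<Sum>\<beta>\<in>{1..J}. tensor (outer \<phi> (axis i 1) ** kraus_op (M \<beta>) (Jk \<beta>) (\<rho> t) ** outer (axis i 1) \<phi>)
          (outer f0 (f \<alpha>) ** ket_bra (f \<beta>) ** outer (f \<alpha>) f0))
        = (\<Sum>\<beta>\<in>{1..J}. if \<beta> = \<alpha> then tensor (outer \<phi> (axis i 1) ** kraus_op (M \<alpha>) (Jk \<alpha>) (\<rho> t)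
            ** outer (axis i 1) \<phi>) (ket_bra f0) else 0)"
      by (intro sum.cong refl) auto
    then show ?thesis
      using \<alpha> by simp
  qed
  finally show ?thesis
    by (simp add: sum_outer_axis_sandwich trace_kraus_op cscale_of_real tensor_scaleR_left
        ket_bra_eq_outer flip: tensor_sum_left)
qed


lemma discard_output: "kraus_map ({1..J} \<times> UNIV) discard_op (\<sigma>QA t) = \<sigma>QA_S t"
proof -
  let ?\<tau> = "tensor (ket_bra \<phi>) (ket_bra f0)"
  have "kraus_map ({1..J} \<times> UNIV) discard_op (\<sigma>QA t)
      = (\<Sum>\<alpha>\<in>{1..J}. \<Sum>i\<in>UNIV. discard_op (\<alpha>, i) ** \<sigma>QA t ** cadj (discard_op (\<alpha>, i)))"
    unfolding kraus_map_def by (subst sum.cartesian_product) (simp add: case_prod_beta')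
  also have "\<dots> = (\<Sum>\<alpha>\<in>{1..J} - S. \<Sum>i\<in>UNIV. discard_op (\<alpha>, i) ** \<sigma>QA t ** cadj (discard_op (\<alpha>, i)))
      + (\<Sum>\<alpha>\<in>S. \<Sum>i\<in>UNIV. discard_op (\<alpha>, i) ** \<sigma>QA t ** cadj (discard_op (\<alpha>, i)))"
    by (rule sum.subset_diff[OF S_sub finite_atLeastAtMost])
  also have "\<dots> = (\<Sum>\<alpha>\<in>{1..J} - S. p \<alpha> t *\<^sub>R ?\<tau>) + (\<Sum>\<alpha>\<in>S. p \<alpha> t *\<^sub>R tensor (\<sigma> \<alpha> t) (ket_bra (f \<alpha>)))"
    by (simp add: discard_output_kept discard_output_erased)
  also have "(\<Sum>\<alpha>\<in>{1..J} - S. p \<alpha> t *\<^sub>R ?\<tau>) = pF t *\<^sub>R ?\<tau>"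
    using sum_p_eq_1[of t] S_sub by (simp add: sum_diff pF_def pS_def flip: scaleR_sum_left)
  finally show ?thesis
    by (simp add: \<sigma>QA_S_def)
qed

lemma trace_\<sigma>QA_S: "trace (\<sigma>QA_S t) = 1"
proof -
  have kept: "trace (p \<alpha> t *\<^sub>R tensor (\<sigma> \<alpha> t) (ket_bra (f \<alpha>))) = of_real (p \<alpha> t)" if "\<alpha> \<in> S" for \<alpha>
  proof -
    have \<alpha>: "\<alpha> \<in> {1..J}"
      using that S_sub by auto
    show ?thesis
      by (simp add: trace_scaleR trace_tensor trace_\<sigma>[OF \<alpha>] trace_ket_bra_f[OF \<alpha>])
  qed
  have "trace (\<sigma>QA_S t) = (\<Sum>\<alpha>\<in>S. trace (p \<alpha> t *\<^sub>R tensor (\<sigma> \<alpha> t) (ket_bra (f \<alpha>))))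
      + trace (pF t *\<^sub>R tensor (ket_bra \<phi>) (ket_bra f0))"
    by (simp only: \<sigma>QA_S_def trace_add trace_sum)
  also have "\<dots> = (\<Sum>\<alpha>\<in>S. of_real (p \<alpha> t)) + of_real (pF t)"
    using sum.cong[OF refl kept, of S]
    by (simp add: trace_scaleR trace_tensor ket_bra_eq_outer trace_outer \<phi>_norm f0_norm)
  finally show ?thesis
    by (simp add: pF_def pS_def flip: of_real_sum)
qed

lemma psd_\<sigma>QA_S: "psd (\<sigma>QA_S t)" and differentiable_\<sigma>QA_S: "\<sigma>QA_S differentiable (at t)"
  using kraus_output_regular[OF psd_\<sigma>QA differentiable_\<sigma>QA, where K = "{1..J} \<times> UNIV"
      and T = discard_op and c = "\<lambda>_. 1" and \<rho>\<^sub>o = \<sigma>QA_S]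
    discard_output trace_\<sigma>QA_S
  by auto

lemma qfi_\<sigma>QA_S_le: "qfi \<sigma>QA_S x \<le> qfi \<sigma>QA x"
  using qfi_kraus_map_mono[OF discard_unit psd_\<sigma>QA differentiable_\<sigma>QA, where c = "\<lambda>_. 1"
      and \<rho>\<^sub>o = \<sigma>QA_S]
    discard_output trace_\<sigma>QA_S
  by simp


lemma psd_\<sigma>: "\<alpha> \<in> {1..J} \<Longrightarrow> psd (\<sigma> \<alpha> t)"
  and differentiable_\<sigma>: "\<alpha> \<in> {1..J} \<Longrightarrow> \<sigma> \<alpha> differentiable (at t)"
  using kraus_output_regular[OF psd_\<rho> diff, where K = "{..<Jk \<alpha>}" and T = "M \<alpha>" and c = "p \<alpha>"
      and \<rho>\<^sub>o = "\<sigma> \<alpha>"]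
    kraus_op_eq_scaleR_\<sigma> p_pos trace_\<sigma>
  by (auto simp: kraus_op_eq_kraus_map)

lemma ancilla_proj_mult_ket_bra_f0: "ancilla_proj S ** ket_bra f0 = 0"
proof -
  have "cinner (f \<alpha>) f0 = 0" if "\<alpha> \<in> S" for \<alpha>
    using f0_orth[OF that] cnj_cinner[of f0 "f \<alpha>"] by simp
  then show ?thesis
    by (simp add: ancilla_proj_def matrix_sum_rdistrib ket_bra_eq_outer outer_mult_outer)
qed

lemma postselect_output:
  "kraus_map {()} (\<lambda>_. tensor (mat 1) (ancilla_proj S)) (\<sigma>QA_S t) = pS t *\<^sub>R \<sigma>QA_cond t"
proof -
  let ?\<Pi> = "tensor (mat 1) (ancilla_proj S)"
  have kept: "?\<Pi> ** tensor (\<sigma> \<alpha> t) (ket_bra (f \<alpha>)) ** ?\<Pi> = tensor (\<sigma> \<alpha> t) (ket_bra (f \<alpha>))"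
    if "\<alpha> \<in> S" for \<alpha>
  proof -
    have \<alpha>: "\<alpha> \<in> {1..J}"
      using that S_sub by auto
    show ?thesis
      using that by (simp add: tensor_mult ancilla_proj_mult_ket_bra[OF S_sub \<alpha>]
          ket_bra_mult_ancilla_proj[OF S_sub \<alpha>] flip: matrix_mul_assoc)
  qed
  have erased: "?\<Pi> ** tensor (ket_bra \<phi>) (ket_bra f0) ** ?\<Pi> = 0"
    by (simp add: tensor_mult ancilla_proj_mult_ket_bra_f0)
  have "kraus_map {()} (\<lambda>_. ?\<Pi>) (\<sigma>QA_S t)
      = (\<Sum>\<alpha>\<in>S. p \<alpha> t *\<^sub>R (?\<Pi> ** tensor (\<sigma> \<alpha> t) (ket_bra (f \<alpha>)) ** ?\<Pi>))
        + pF t *\<^sub>R (?\<Pi> ** tensor (ket_bra \<phi>) (ket_bra f0) ** ?\<Pi>)"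
    by (simp add: kraus_map_def cadj_tensor cadj_ancilla_proj \<sigma>QA_S_def matrix_add_ldistrib
        matrix_add_rdistrib matrix_sum_ldistrib matrix_sum_rdistrib matrix_scaleR_left
        matrix_scaleR_right)
  also have "\<dots> = (\<Sum>\<alpha>\<in>S. p \<alpha> t *\<^sub>R tensor (\<sigma> \<alpha> t) (ket_bra (f \<alpha>)))"
    by (simp add: kept erased cong: sum.cong)
  also have "\<dots> = pS t *\<^sub>R \<sigma>QA_cond t"
    using pS_pos[of t] by (simp add: \<sigma>QA_cond_def scaleR_sum_right)
  finally show ?thesis .
qed

lemma trace_\<sigma>QA_cond: "trace (\<sigma>QA_cond t) = 1"
proof -
  have "trace ((p \<alpha> t / pS t) *\<^sub>R tensor (\<sigma> \<alpha> t) (ket_bra (f \<alpha>))) = of_real (p \<alpha> t / pS t)"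
    if "\<alpha> \<in> S" for \<alpha>
  proof -
    have \<alpha>: "\<alpha> \<in> {1..J}"
      using that S_sub by auto
    show ?thesis
      by (simp add: trace_scaleR trace_tensor trace_\<sigma>[OF \<alpha>] trace_ket_bra_f[OF \<alpha>])
  qed
  then have "trace (\<sigma>QA_cond t) = of_real ((\<Sum>\<alpha>\<in>S. p \<alpha> t) / pS t)"
    by (simp add: \<sigma>QA_cond_def trace_sum sum_divide_distrib del: of_real_divide)
  then show ?thesis
    using pS_pos[of t] by (simp add: pS_def)
qed

lemma qfi_\<sigma>QA_cond_le: "pS x * qfi \<sigma>QA_cond x \<le> qfi \<sigma>QA_S x"
proof (rule qfi_kraus_map_mono[OF _ psd_\<sigma>QA_S differentiable_\<sigma>QA_S postselect_output pS_pos trace_\<sigma>QA_cond])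
  show "(\<Sum>k\<in>{()}. cadj (tensor (mat 1) (ancilla_proj S)) ** tensor (mat 1) (ancilla_proj S))
      + cadj (mat 1 - tensor (mat 1) (ancilla_proj S)) ** (mat 1 - tensor (mat 1) (ancilla_proj S)) = mat 1"
    by (simp add: projector_complement_unit cadj_tensor cadj_ancilla_proj tensor_mult
        ancilla_proj_idem[OF S_sub])
qed

lemma qfi_\<sigma>QA_cond_single_outcome:
  assumes "S = {\<alpha>}"
  shows "pS x * qfi \<sigma>QA_cond x = p \<alpha> x * qfi (\<sigma> \<alpha>) x"
proof -
  have \<alpha>: "\<alpha> \<in> {1..J}"
    using assms S_sub by auto
  have "p \<alpha> t \<noteq> 0" for t
    using p_pos[OF \<alpha>, of t] by simp
  then have "\<sigma>QA_cond = (\<lambda>t. tensor (\<sigma> \<alpha> t) (ket_bra (f \<alpha>)))"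
    by (simp add: fun_eq_iff \<sigma>QA_cond_def pS_def assms)
  then have "qfi \<sigma>QA_cond x = qfi (\<sigma> \<alpha>) x"
    using qfi_tensor_ket_bra[OF psd_\<sigma>[OF \<alpha>] differentiable_\<sigma>[OF \<alpha>]] f_orth[OF \<alpha> \<alpha>] by simp
  then show ?thesis
    by (simp add: pS_def assms)
qed

end

theorem theorem1:
  fixes \<rho> :: "real \<Rightarrow> 'n::finite cmat"
    and J :: nat and Jk :: "nat \<Rightarrow> nat" and M :: "nat \<Rightarrow> nat \<Rightarrow> 'n cmat"
    and S :: "nat set"
    and f :: "nat \<Rightarrow> complex^'a::finite" and f0 :: "complex^'a"
    and \<phi> :: "complex^'n" and x :: real
    and p :: "nat \<Rightarrow> real \<Rightarrow> real" and pS pF :: "real \<Rightarrow> real"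
    and \<sigma> :: "nat \<Rightarrow> real \<Rightarrow> 'n cmat"
    and \<sigma>QA \<sigma>QA_S \<sigma>QA_cond :: "real \<Rightarrow> ('n \<times> 'a) cmat"
  assumes dens: "\<And>t. density_op (\<rho> t)"
    and diff: "\<And>t. \<rho> differentiable (at t)"
    and complete: "(\<Sum>\<alpha>\<in>{1..J}. \<Sum>j<Jk \<alpha>. adj (M \<alpha> j) ** M \<alpha> j) = mat 1"
    and p_def: "\<And>\<alpha> t. p \<alpha> t = Re (trace (kraus_op (M \<alpha>) (Jk \<alpha>) (\<rho> t)))"
    and p_pos: "\<And>\<alpha> t. \<alpha> \<in> {1..J} \<Longrightarrow> p \<alpha> t > 0"
    and \<sigma>_def: "\<And>\<alpha> t. \<sigma> \<alpha> t = (1 / p \<alpha> t) *\<^sub>R kraus_op (M \<alpha>) (Jk \<alpha>) (\<rho> t)"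
    and S_sub: "S \<subseteq> {1..J}"
    and pS_def: "\<And>t. pS t = (\<Sum>\<alpha>\<in>S. p \<alpha> t)"
    and pF_def: "\<And>t. pF t = 1 - pS t"
    and pS_pos: "\<And>t. pS t > 0"
    and pF_pos: "\<And>t. pF t > 0"
    and f_orth: "\<And>\<alpha> \<beta>. \<alpha> \<in> {1..J} \<Longrightarrow> \<beta> \<in> {1..J} \<Longrightarrow>
                    cinner (f \<alpha>) (f \<beta>) = (if \<alpha> = \<beta> then 1 else 0)"
    and f0_norm: "cinner f0 f0 = 1"
    and f0_orth: "\<And>\<alpha>. \<alpha> \<in> S \<Longrightarrow> cinner f0 (f \<alpha>) = 0"
    and \<phi>_norm: "cinner \<phi> \<phi> = 1"
    and \<sigma>QA_def: "\<And>t. \<sigma>QA t =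
        (\<Sum>\<alpha>\<in>{1..J}. p \<alpha> t *\<^sub>R tensor (\<sigma> \<alpha> t) (ket_bra (f \<alpha>)))"
    and \<sigma>QA_S_def: "\<And>t. \<sigma>QA_S t =
        (\<Sum>\<alpha>\<in>S. p \<alpha> t *\<^sub>R tensor (\<sigma> \<alpha> t) (ket_bra (f \<alpha>)))
          + pF t *\<^sub>R tensor (ket_bra \<phi>) (ket_bra f0)"
    and \<sigma>QA_cond_def: "\<And>t. \<sigma>QA_cond t =
        (\<Sum>\<alpha>\<in>S. (p \<alpha> t / pS t) *\<^sub>R tensor (\<sigma> \<alpha> t) (ket_bra (f \<alpha>)))"
  shows "qfi \<rho> x \<ge> qfi \<sigma>QA x \<and> qfi \<sigma>QA x \<ge> qfi \<sigma>QA_S x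
         \<and> qfi \<sigma>QA_S x \<ge> pS x * qfi \<sigma>QA_cond x
         \<and> (\<forall>\<alpha>. S = {\<alpha>} \<longrightarrow> pS x * qfi \<sigma>QA_cond x = p \<alpha> x * qfi (\<sigma> \<alpha>) x)"
proof -
  interpret selection_measurement \<rho> J Jk M S f f0 \<phi> p pS pF \<sigma> \<sigma>QA \<sigma>QA_S \<sigma>QA_cond
    by unfold_locales (fact assms)+
  show ?thesis
    using qfi_\<sigma>QA_le qfi_\<sigma>QA_S_le qfi_\<sigma>QA_cond_le qfi_\<sigma>QA_cond_single_outcome by blast
qed

end
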